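(* Let $\Theta=\{1,2\}$, let $P_1,\dots,P_m$ be experiments, and let $(A,u)$ be a decision problem with $A=\{a_1,\dots,a_n\}$ satisfying: $u(1,a_1)<\cdots<u(1,a_n)$; $u(2,a_1)>\cdots>u(2,a_n)$; $u(\cdot,a_1)=(0,0)$; and no $a_i$ is weakly*-dominated (there is no $\alpha\in\Delta(A\setminus\{a_i\})$ with $u(\cdot,a_i)\le u(\cdot,\alpha)$ componentwise). Let $(A_1^*,u_1^* ),\dots,(A_{n-1}^*,u_{n-1}^* )$ be the canonical decomposition of $(A,u)$ and, for each $\ell$, let $\sigma_\ell^*:\mathbf Y\to\Delta(A_\ell^* )$ be robustly optimal for $(A_\ell^*,u_\ell^* )$. Then: (1) $V(P_1,\dots,P_m;(A,u))=\sum_{\ell=1}^{n-1}\max_{j=1,\dots,m}V(P_j;(A_\ell^*,u_\ell^* ))$; (2) there exists $\sigma^*:\mathbf Y\to\Delta(A)$ with $u(\sigma^*(\mathbf y))\ge\sum_{\ell=1}^{n-1}u_\ell^*(\sigma_\ell^*(\mathbf y))$ for all $\mathbf y\in\mathbf Y$, and every such $\sigma^*$ is robustly optimal for $(A,u)$.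
   Context: $\Theta$ is a finite set of states. A decision problem is a pair $(A,u)$ with $A$ a finite nonempty action set and $u:\Theta\times A\to\mathbb{R}$; for $\alpha\in\Delta(A)$ write $u(\theta,\alpha)=\sum_a\alpha(a)u(\theta,a)$ and $u(\alpha)=(u(\theta,\alpha))_{\theta}$; vector inequalities are componentwise. An experiment is a map $P:\Theta\to\Delta(Y)$ with $Y$ a finite signal set. Given experiments $P_j:\Theta\to\Delta(Y_j)$, $j=1,\dots,m$, let $\mathbf Y=Y_1\times\cdots\times Y_m$ and let $\mathcal P(P_1,\dots,P_m)$ be the set of experiments $P:\Theta\to\Delta(\mathbf Y)$ whose $j$-th marginal is $P_j(\cdot|\theta)$ for every $\theta$ and $j$. A strategy is a map $\sigma:\mathbf Y\to\Delta(A)$. Define $V(P_1,\dots,P_m;(A,u))=\max_{\sigma}\min_{P\in\mathcal P(P_1,\dots,P_m)}\sum_{\theta}\sum_{\mathbf y}P(\mathbf y|\theta)u(\theta,\sigma(\mathbf y))$, and call a maximizing $\sigma$ robustly optimal for $(A,u)$; for $m=1$, $V(P;(A,u))=\max_{\sigma:Y\to\Delta(A)}\sum_\theta\sum_y P(y|\theta)u(\theta,\sigma(y))$. For $(A,u)$ with actions ordered $a_1,\dots,a_n$ as in the claim, its canonical decomposition is the collection of $n-1$ binary-action problems $(A_\ell^*,u_\ell^* )$, $\ell=1,\dots,n-1$, with $A_\ell^*=\{0,1\}$, $u_\ell^*(\cdot,0)=(0,0)$ and $u_\ell^*(\cdot,1)=u(\cdot,a_{\ell+1})-u(\cdot,a_\ell)$.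 *)

theory Defs
  imports Main "HOL-Library.FuncSet" Complex_Main
begin

definition is_dist :: "'x set \<Rightarrow> ('x \<Rightarrow> real) \<Rightarrow> bool" where
  "is_dist S p \<longleftrightarrow> (\<forall>x\<in>S. 0 \<le> p x) \<and> sum p S = 1"

definition is_experiment :: "'s set \<Rightarrow> 'y set \<Rightarrow> ('s \<Rightarrow> 'y \<Rightarrow> real) \<Rightarrow> bool" where
  "is_experiment Th Y P \<longleftrightarrow> finite Y \<and> (\<forall>\<theta>\<in>Th. is_dist Y (P \<theta>))"

definition eu :: "'a set \<Rightarrow> ('s \<Rightarrow> 'a \<Rightarrow> real) \<Rightarrow> 's \<Rightarrow> ('a \<Rightarrow> real) \<Rightarrow> real" where
  "eu A u \<theta> \<alpha> = (\<Sum>a\<in>A. \<alpha> a * u \<theta> a)"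

(* signal profiles  Y_0 x ... x Y_(m-1)  (experiments indexed 0..m-1) *)
definition profiles :: "nat \<Rightarrow> (nat \<Rightarrow> 'y set) \<Rightarrow> (nat \<Rightarrow> 'y) set" where
  "profiles m Y = PiE {..<m} Y"

definition couplings ::
  "'s set \<Rightarrow> nat \<Rightarrow> (nat \<Rightarrow> 'y set) \<Rightarrow> (nat \<Rightarrow> 's \<Rightarrow> 'y \<Rightarrow> real)
     \<Rightarrow> ('s \<Rightarrow> (nat \<Rightarrow> 'y) \<Rightarrow> real) set" where
  "couplings Th m Y P = {Q. \<forall>\<theta>\<in>Th. is_dist (profiles m Y) (Q \<theta>) \<and>
      (\<forall>j<m. \<forall>yj\<in>Y j. (\<Sum>y\<in>{y\<in>profiles m Y. y j = yj}. Q \<theta> y) = P j \<theta> yj)}"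

definition strategies :: "'a set \<Rightarrow> (nat \<Rightarrow> 'y) set \<Rightarrow> ((nat \<Rightarrow> 'y) \<Rightarrow> 'a \<Rightarrow> real) set" where
  "strategies A YY = {\<sigma>. \<forall>y\<in>YY. is_dist A (\<sigma> y)}"

definition payoff ::
  "'s set \<Rightarrow> 'a set \<Rightarrow> ('s \<Rightarrow> 'a \<Rightarrow> real) \<Rightarrow> (nat \<Rightarrow> 'y) set
     \<Rightarrow> ('s \<Rightarrow> (nat \<Rightarrow> 'y) \<Rightarrow> real) \<Rightarrow> ((nat \<Rightarrow> 'y) \<Rightarrow> 'a \<Rightarrow> real) \<Rightarrow> real" where
  "payoff Th A u YY Q \<sigma> = (\<Sum>\<theta>\<in>Th. \<Sum>y\<in>YY. Q \<theta> y * eu A u \<theta> (\<sigma> y))"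

definition guarantee ::
  "'s set \<Rightarrow> 'a set \<Rightarrow> ('s \<Rightarrow> 'a \<Rightarrow> real) \<Rightarrow> nat \<Rightarrow> (nat \<Rightarrow> 'y set)
     \<Rightarrow> (nat \<Rightarrow> 's \<Rightarrow> 'y \<Rightarrow> real) \<Rightarrow> ((nat \<Rightarrow> 'y) \<Rightarrow> 'a \<Rightarrow> real) \<Rightarrow> real" where
  "guarantee Th A u m Y P \<sigma> =
     (INF Q\<in>couplings Th m Y P. payoff Th A u (profiles m Y) Q \<sigma>)"

definition Vrob ::
  "'s set \<Rightarrow> 'a set \<Rightarrow> ('s \<Rightarrow> 'a \<Rightarrow> real) \<Rightarrow> nat \<Rightarrow> (nat \<Rightarrow> 'y set)
     \<Rightarrow> (nat \<Rightarrow> 's \<Rightarrow> 'y \<Rightarrow> real) \<Rightarrow> real" where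
  "Vrob Th A u m Y P = (SUP \<sigma>\<in>strategies A (profiles m Y). guarantee Th A u m Y P \<sigma>)"

definition robustly_optimal ::
  "'s set \<Rightarrow> 'a set \<Rightarrow> ('s \<Rightarrow> 'a \<Rightarrow> real) \<Rightarrow> nat \<Rightarrow> (nat \<Rightarrow> 'y set)
     \<Rightarrow> (nat \<Rightarrow> 's \<Rightarrow> 'y \<Rightarrow> real) \<Rightarrow> ((nat \<Rightarrow> 'y) \<Rightarrow> 'a \<Rightarrow> real) \<Rightarrow> bool" where
  "robustly_optimal Th A u m Y P \<sigma> \<longleftrightarrow>
     \<sigma> \<in> strategies A (profiles m Y) \<and> guarantee Th A u m Y P \<sigma> = Vrob Th A u m Y P"

definition V1 ::
  "'s set \<Rightarrow> 'a set \<Rightarrow> ('s \<Rightarrow> 'a \<Rightarrow> real) \<Rightarrow> 'y set \<Rightarrow> ('s \<Rightarrow> 'y \<Rightarrow> real) \<Rightarrow> real" where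
  "V1 Th A u Y P = (SUP \<sigma>\<in>{\<sigma>. \<forall>y\<in>Y. is_dist A (\<sigma> y)}.
      \<Sum>\<theta>\<in>Th. \<Sum>y\<in>Y. P \<theta> y * eu A u \<theta> (\<sigma> y))"

(* canonical decomposition: binary problem l, actions {0,1},
   u*_l(.,0) = 0, u*_l(.,1) = u(.,a_(l+1)) - u(.,a_l) *)
definition ustar :: "('s \<Rightarrow> nat \<Rightarrow> real) \<Rightarrow> nat \<Rightarrow> 's \<Rightarrow> nat \<Rightarrow> real" where
  "ustar u l \<theta> a = (if a = 1 then u \<theta> (Suc l) - u \<theta> l else 0)"

definition weakly_star_dominated :: "'s set \<Rightarrow> 'a set \<Rightarrow> ('s \<Rightarrow> 'a \<Rightarrow> real) \<Rightarrow> 'a \<Rightarrow> bool" where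
  "weakly_star_dominated Th A u a \<longleftrightarrow>
     (\<exists>\<alpha>. is_dist (A - {a}) \<alpha> \<and> (\<forall>\<theta>\<in>Th. u \<theta> a \<le> eu (A - {a}) u \<theta> \<alpha>))"

end

theory Submission
  imports Defs
begin

(* With two states, the binary problem l of the canonical decomposition only asks whether the
   posterior of state 1 exceeds the belief t l at which a_l and a_(l+1) are indifferent, and
   undominatedness makes t 1 < ... < t (n-1).

   Lower bound: a mixed action dominating the sum of the robustly optimal binary strategies
   exists (a comonotone rearrangement, possible because the odds t l / (1 - t l) increase), and
   it guarantees the sum of the binary values, each of which is at least the best value of a
   single experiment.

   Upper bound: each experiment induces a distribution of posteriors, which we split onto the
   grid of thresholds. The pointwise maximum over the experiments of the call functions of
   these distributions is again convex, hence the call function of a joint distribution that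
   dominates every experiment in the convex order. By a discrete Strassen theorem every
   experiment is a garbling of the joint one; gluing the garblings conditionally independently
   gives a coupling under which no strategy earns more than the sum over l of the best single
   value of problem l. *)

section \<open>Call functions of weights on an increasing grid\<close>

definition call_fun :: "(nat \<Rightarrow> real) \<Rightarrow> nat \<Rightarrow> (nat \<Rightarrow> real) \<Rightarrow> real \<Rightarrow> real" where
  "call_fun g K w x = (\<Sum>i\<le>K. w i * max 0 (g i - x))"

lemma call_fun_nonneg: "\<forall>i\<le>K. 0 \<le> w i \<Longrightarrow> 0 \<le> call_fun g K w x"
  unfolding call_fun_def by (auto intro!: sum_nonneg)

lemma max0_convex_combination:
  fixes lam a b c :: real
  assumes "0 \<le> lam" "lam \<le> 1"
  shows "max 0 (c - (lam*a + (1-lam)*b)) \<le> lam * max 0 (c - a) + (1-lam) * max 0 (c-b)"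
proof -
  have "c - (lam*a + (1-lam)*b) = lam*(c-a) + (1-lam)*(c-b)" by (simp add: algebra_simps)
  moreover have "lam*(c-a) \<le> lam * max 0 (c-a)" "(1-lam)*(c-b) \<le> (1-lam) * max 0 (c-b)"
    using assms by (simp_all add: mult_left_mono)
  ultimately show ?thesis using assms by simp
qed

lemma positive_run_around:
  fixes d :: "nat \<Rightarrow> real"
  assumes "d 0 = 0" "d K = 0" "\<forall>l\<le>K. 0 \<le> d l" "l0 \<le> K" "d l0 > 0"
  shows "\<exists>p q. p < l0 \<and> l0 < q \<and> q \<le> K \<and> d p = 0 \<and> d q = 0 \<and> (\<forall>i. p < i \<and> i < q \<longrightarrow> d i > 0)"
proof -
  define A where "A = {i. i < l0 \<and> d i = 0}"
  define B where "B = {i. l0 < i \<and> i \<le> K \<and> d i = 0}"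
  have "0 < l0" "l0 < K" using assms
    by (metis gr0I less_irrefl, metis le_neq_implies_less less_irrefl)
  then have A: "finite A" "A \<noteq> {}" and B: "finite B" "B \<noteq> {}"
    unfolding A_def B_def using assms by auto
  define p where "p = Max A"
  define q where "q = Min B"
  have pA: "p \<in> A" and qB: "q \<in> B" using A B Max_in Min_in p_def q_def by blast+
  have "d i > 0" if i: "p < i" "i < q" for i
  proof -
    have "i \<notin> A" "i \<notin> B" using A B i p_def q_def by (auto dest: Max_ge Min_le)
    then have "d i \<noteq> 0" using assms(5) unfolding A_def B_def using i qB B_def
      by (cases i l0 rule: linorder_cases) auto
    moreover have "i \<le> K" using i qB B_def by auto
    ultimately show "d i > 0" using assms(3) by force
  qed
  then show ?thesis using pA qB unfolding A_def B_def by blast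
qed

locale increasing_grid =
  fixes g :: "nat \<Rightarrow> real" and K :: nat
  assumes grid_step: "\<And>i. i < K \<Longrightarrow> g i < g (Suc i)"
begin

lemma grid_less: "i < j \<Longrightarrow> j \<le> K \<Longrightarrow> g i < g j"
proof (induction j)
  case (Suc j)
  then show ?case using grid_step[of j]
    by (metis less_Suc_eq Suc_le_lessD Suc_leD order.strict_trans)
qed simp

lemma grid_le: "i \<le> j \<Longrightarrow> j \<le> K \<Longrightarrow> g i \<le> g j"
  using grid_less by (metis le_less order.refl)

lemma call_fun_diff:
  assumes "1 \<le> l" "l \<le> K"
  shows "call_fun g K w (g (l-1)) - call_fun g K w (g l) = (g l - g (l-1)) * (\<Sum>i\<in>{l..K}. w i)"
proof -
  have "call_fun g K w (g (l-1)) - call_fun g K w (g l) =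
      (\<Sum>i\<le>K. w i * (max 0 (g i - g (l-1)) - max 0 (g i - g l)))"
    unfolding call_fun_def by (simp add: sum_subtractf[symmetric] algebra_simps)
  also have "\<dots> = (\<Sum>i\<le>K. (if l \<le> i then w i * (g l - g (l-1)) else 0))"
  proof (rule sum.cong[OF refl])
    fix i assume i: "i \<in> {..K}"
    have "g (l-1) < g l" using grid_less[of "l-1" l] assms by simp
    moreover have "l \<le> i \<Longrightarrow> g l \<le> g i" "\<not> l \<le> i \<Longrightarrow> g i \<le> g (l-1)"
      using grid_le i assms by auto
    ultimately show "w i * (max 0 (g i - g (l-1)) - max 0 (g i - g l)) =
        (if l \<le> i then w i * (g l - g (l-1)) else 0)" by auto
  qed
  also have "\<dots> = (\<Sum>i\<in>{l..K}. w i * (g l - g (l-1)))"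
    by (rule sum.mono_neutral_cong_right) auto
  also have "\<dots> = (g l - g (l-1)) * (\<Sum>i\<in>{l..K}. w i)"
    by (simp add: sum_distrib_right mult.commute)
  finally show ?thesis .
qed

lemma call_fun_top: "call_fun g K w (g K) = 0"
  unfolding call_fun_def using grid_le by (intro sum.neutral) auto

lemma call_fun_bottom: "call_fun g K w (g 0) = (\<Sum>i\<le>K. w i * g i) - g 0 * (\<Sum>i\<le>K. w i)"
  unfolding call_fun_def
  by (simp add: sum_distrib_left sum_subtractf[symmetric], rule sum.cong)
     (use grid_le[of 0] in \<open>auto simp: max_def algebra_simps\<close>)

lemma weights_eq_if_call_fun_eq:
  assumes "\<forall>l\<le>K. call_fun g K w (g l) = call_fun g K v (g l)"
    and "(\<Sum>i\<le>K. w i) = (\<Sum>i\<le>K. v i)"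
  shows "\<forall>i\<le>K. w i = v i"
proof -
  have tails: "(\<Sum>i\<in>{l..K}. w i) = (\<Sum>i\<in>{l..K}. v i)" if "l \<le> Suc K" for l
  proof (cases "l = 0 \<or> l = Suc K")
    case True
    then show ?thesis using assms(2) by (auto simp: atLeast0AtMost)
  next
    case False
    then have l: "1 \<le> l" "l \<le> K" and "g (l-1) < g l" using that grid_less[of "l-1" l] by auto
    then show ?thesis using call_fun_diff[OF l, of w] call_fun_diff[OF l, of v] assms(1) by auto
  qed
  show ?thesis
  proof (intro allI impI)
    fix i assume "i \<le> K"
    then have "{i..K} = insert i {Suc i..K}" by auto
    then show "w i = v i" using tails[of i] tails[of "Suc i"] \<open>i \<le> K\<close> by simp
  qed
qed

lemma call_fun_convex:
  assumes "\<forall>i\<le>K. 0 \<le> w i" "0 \<le> lam" "lam \<le> 1"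
  shows "call_fun g K w (lam*a + (1-lam)*b) \<le> lam * call_fun g K w a + (1-lam) * call_fun g K w b"
proof -
  have "call_fun g K w (lam*a + (1-lam)*b) \<le>
      (\<Sum>i\<le>K. lam * (w i * max 0 (g i - a)) + (1-lam) * (w i * max 0 (g i - b)))"
    unfolding call_fun_def
  proof (rule sum_mono)
    fix i assume "i \<in> {..K}"
    then have "w i * max 0 (g i - (lam*a + (1-lam)*b)) \<le>
        w i * (lam * max 0 (g i - a) + (1-lam) * max 0 (g i - b))"
      using assms max0_convex_combination[OF assms(2,3)] by (intro mult_left_mono) auto
    then show "w i * max 0 (g i - (lam*a + (1-lam)*b)) \<le>
        lam * (w i * max 0 (g i - a)) + (1-lam) * (w i * max 0 (g i - b))"
      by (simp add: algebra_simps)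
  qed
  also have "\<dots> = lam * call_fun g K w a + (1-lam) * call_fun g K w b"
    unfolding call_fun_def by (simp add: sum_distrib_left sum.distrib)
  finally show ?thesis .
qed

end

text \<open>The increase of a call function at \<open>x\<close> when a unit mass at \<open>c\<close> is spread onto \<open>a\<close> and
  \<open>b\<close> keeping its mean.\<close>

definition tent :: "real \<Rightarrow> real \<Rightarrow> real \<Rightarrow> real \<Rightarrow> real" where
  "tent a c b x = ((b-c)/(b-a)) * max 0 (a - x) + (1 - (b-c)/(b-a)) * max 0 (b - x) - max 0 (c - x)"

lemma tent_left: assumes "a < c" "c < b" "x \<le> a" shows "tent a c b x = 0"
proof -
  define L where "L = (b-c)/(b-a)"
  have "L*(b-a) = b-c" unfolding L_def using assms by simp
  then have "L * (a - x) + (1 - L) * (b - x) - (c - x) = 0" by algebra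
  then show ?thesis unfolding tent_def L_def[symmetric] using assms by simp
qed

lemma tent_right: assumes "a < c" "c < b" "b \<le> x" shows "tent a c b x = 0"
  unfolding tent_def using assms by simp

lemma tent_pos: assumes "a < c" "c < b" "a < x" "x < b" shows "tent a c b x > 0"
proof (cases "x \<le> c")
  case True
  have "(1 - (b-c)/(b-a)) * (b - x) - (c - x) = (b-c)/(b-a) * (x - a)"
    using assms by (simp add: field_simps)
  moreover have "(b-c)/(b-a) * (x - a) > 0" using assms by simp
  ultimately show ?thesis unfolding tent_def using assms True by simp
next
  case False
  have "1 - (b-c)/(b-a) = (c - a)/(b-a)" using assms by (simp add: field_simps)
  then have "(1 - (b-c)/(b-a)) * (b - x) > 0" using assms by simp
  then show ?thesis unfolding tent_def using assms False by simp
qed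

lemma tent_nonneg: assumes "a < c" "c < b" shows "tent a c b x \<ge> 0"
  using tent_left tent_right tent_pos assms
  by (metis linorder_not_le order.strict_implies_order order_refl)

context increasing_grid
begin

lemma call_fun_affine_between:
  assumes "p < q" "q \<le> K" "0 \<le> lam" "lam \<le> 1" and "\<forall>i. p < i \<and> i < q \<longrightarrow> w i = 0"
  shows "call_fun g K w (lam * g p + (1-lam) * g q) =
    lam * call_fun g K w (g p) + (1-lam) * call_fun g K w (g q)"
proof -
  have gpq: "g p < g q" using grid_less assms by simp
  have "g p \<le> lam * g p + (1 - lam) * g q" "lam * g p + (1 - lam) * g q \<le> g q"
    using gpq assms mult_left_mono[of "g p" "g q" lam] mult_left_mono[of "g p" "g q" "1 - lam"]
    by (simp_all add: algebra_simps)
  then have "w i * max 0 (g i - (lam * g p + (1 - lam) * g q)) =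
      lam * (w i * max 0 (g i - g p)) + (1-lam) * (w i * max 0 (g i - g q))" if "i \<le> K" for i
    using grid_le[of i p] grid_le[of q i] that assms gpq
    by (cases "i \<le> p"; cases "q \<le> i") (auto simp: algebra_simps)
  then show ?thesis unfolding call_fun_def by (simp add: sum_distrib_left sum.distrib)
qed

lemma weight_between_if_call_fun_less:
  assumes "\<forall>i\<le>K. 0 \<le> w i" "\<forall>i\<le>K. 0 \<le> v i" "p < l" "l < q" "q \<le> K"
    and "call_fun g K w (g p) = call_fun g K v (g p)" "call_fun g K w (g q) = call_fun g K v (g q)"
    and "call_fun g K w (g l) < call_fun g K v (g l)"
  shows "\<exists>i. p < i \<and> i < q \<and> w i > 0"
proof (rule ccontr)
  assume "\<not> ?thesis"
  then have w0: "\<forall>i. p < i \<and> i < q \<longrightarrow> w i = 0"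
    using assms(1,5) by (meson less_imp_le_nat not_less order.trans order_antisym)
  define lam where "lam = (g q - g l) / (g q - g p)"
  have "g p < g l" "g l < g q" using grid_less assms by auto
  then have lam: "0 \<le> lam" "lam \<le> 1" and "lam * (g q - g p) = g q - g l"
    unfolding lam_def by (auto simp: field_simps)
  then have gl: "g l = lam * g p + (1-lam) * g q" by algebra
  have "call_fun g K w (g l) = lam * call_fun g K w (g p) + (1-lam) * call_fun g K w (g q)"
    unfolding gl by (rule call_fun_affine_between) (use assms lam w0 in auto)
  moreover have "call_fun g K v (g l) \<le> lam * call_fun g K v (g p) + (1-lam) * call_fun g K v (g q)"
    unfolding gl by (rule call_fun_convex) (use assms lam in auto)
  ultimately show False using assms(6-8) by simp
qed

end

section \<open>A discrete Strassen theorem\<close>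

context increasing_grid
begin

definition martingale_coupling :: "(nat \<Rightarrow> real) \<Rightarrow> (nat \<Rightarrow> real) \<Rightarrow> (nat \<Rightarrow> nat \<Rightarrow> real) \<Rightarrow> bool" where
  "martingale_coupling w v \<gamma> \<longleftrightarrow> (\<forall>i j. 0 \<le> \<gamma> i j) \<and>
     (\<forall>i\<le>K. (\<Sum>j\<le>K. \<gamma> i j) = w i) \<and> (\<forall>j\<le>K. (\<Sum>i\<le>K. \<gamma> i j) = v j) \<and>
     (\<forall>i\<le>K. (\<Sum>j\<le>K. \<gamma> i j * g j) = w i * g i)"

definition convex_dominated :: "(nat \<Rightarrow> real) \<Rightarrow> (nat \<Rightarrow> real) \<Rightarrow> bool" where
  "convex_dominated w v \<longleftrightarrow> (\<forall>i\<le>K. 0 \<le> w i) \<and> (\<forall>i\<le>K. 0 \<le> v i) \<and>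
     (\<Sum>i\<le>K. w i) = (\<Sum>i\<le>K. v i) \<and> (\<Sum>i\<le>K. w i * g i) = (\<Sum>i\<le>K. v i * g i) \<and>
     (\<forall>l\<le>K. call_fun g K w (g l) \<le> call_fun g K v (g l))"

text \<open>The Strassen theorem is proved by undoing mean-preserving spreads of mass from \<open>l\<close> onto
  \<open>p\<close> and \<open>q\<close> one at a time, each time decreasing \<open>call_gap_measure\<close>.\<close>

definition spread_dir :: "nat \<Rightarrow> nat \<Rightarrow> nat \<Rightarrow> real \<Rightarrow> nat \<Rightarrow> real" where
  "spread_dir p l q lam i =
     (if i = p then lam else 0) + (if i = q then 1 - lam else 0) - (if i = l then 1 else 0)"

definition call_gap_measure :: "(nat \<Rightarrow> real) \<Rightarrow> (nat \<Rightarrow> real) \<Rightarrow> nat" where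
  "call_gap_measure v w = card {l\<in>{..K}. call_fun g K w (g l) < call_fun g K v (g l)}
     + card {l\<in>{..K}. call_fun g K w (g l) < call_fun g K v (g l) \<and> 0 < w l}"

lemma sum_spread_dir:
  assumes "p \<le> K" "l \<le> K" "q \<le> K"
  shows "(\<Sum>i\<le>K. spread_dir p l q lam i * f i) = lam * f p + (1-lam) * f q - f l"
proof -
  have "(\<Sum>i\<le>K. spread_dir p l q lam i * f i) = (\<Sum>i\<le>K. (if i = p then lam * f p else 0) +
      (if i = q then (1-lam) * f q else 0) - (if i = l then f l else 0))"
    by (rule sum.cong) (auto simp: spread_dir_def algebra_simps)
  then show ?thesis using assms by (simp add: sum.distrib sum_subtractf)
qed

lemma call_fun_spread:
  assumes "p < l" "l < q" "q \<le> K"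
  shows "call_fun g K (\<lambda>i. w i + s * spread_dir p l q ((g q - g l) / (g q - g p)) i) x =
    call_fun g K w x + s * tent (g p) (g l) (g q) x"
proof -
  have "call_fun g K (\<lambda>i. w i + s * spread_dir p l q ((g q - g l) / (g q - g p)) i) x =
      call_fun g K w x +
      s * (\<Sum>i\<le>K. spread_dir p l q ((g q - g l) / (g q - g p)) i * max 0 (g i - x))"
    unfolding call_fun_def by (simp add: algebra_simps sum.distrib sum_distrib_left)
  then show ?thesis using assms by (simp add: sum_spread_dir tent_def)
qed


lemma martingale_coupling_of_spread:
  assumes c': "martingale_coupling w' v \<gamma>'"
    and w': "\<And>i. w' i = w i + s * spread_dir p l q lam i"
    and pq: "p < l" "l < q" "q \<le> K" and lam: "0 < lam" "lam < 1" "lam * g p + (1-lam) * g q = g l"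
    and s: "0 < s" and w: "0 \<le> w p" "0 \<le> w q"
  shows "\<exists>\<gamma>. martingale_coupling w v \<gamma>"
proof -
  have nn': "\<And>i j. 0 \<le> \<gamma>' i j" and row': "\<And>i. i \<le> K \<Longrightarrow> (\<Sum>j\<le>K. \<gamma>' i j) = w' i"
    and col': "\<And>j. j \<le> K \<Longrightarrow> (\<Sum>i\<le>K. \<gamma>' i j) = v j"
    and bar': "\<And>i. i \<le> K \<Longrightarrow> (\<Sum>j\<le>K. \<gamma>' i j * g j) = w' i * g i"
    using c' unfolding martingale_coupling_def by auto
  have dist: "p \<noteq> l" "l \<noteq> q" "p \<noteq> q" using pq by auto
  have w'p: "w' p = w p + s * lam" and w'q: "w' q = w q + s * (1 - lam)" and w'l: "w' l = w l - s"
    using w' dist by (simp_all add: spread_dir_def)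
  have "0 < w' p" "0 < w' q" using w'p w'q w s lam by (simp_all add: add_nonneg_pos)
  define a where "a = s * lam / w' p"
  define b where "b = s * (1-lam) / w' q"
  have a: "a * w' p = s * lam" "0 \<le> a" "a \<le> 1" and b: "b * w' q = s * (1-lam)" "0 \<le> b" "b \<le> 1"
    unfolding a_def b_def using \<open>0 < w' p\<close> \<open>0 < w' q\<close> w'p w'q w s lam by (auto simp: field_simps)
  text \<open>Return to \<open>l\<close> the shares \<open>a\<close> and \<open>b\<close> of the rows of \<open>p\<close> and \<open>q\<close> that came from it.\<close>
  define \<gamma> where "\<gamma> i j = \<gamma>' i j + (if i = l then a * \<gamma>' p j + b * \<gamma>' q j else 0)
      - (if i = p then a * \<gamma>' p j else 0) - (if i = q then b * \<gamma>' q j else 0)" for i j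
  have row_f: "(\<Sum>j\<le>K. \<gamma> i j * f j) = (\<Sum>j\<le>K. \<gamma>' i j * f j)
      + (if i = l then a * (\<Sum>j\<le>K. \<gamma>' p j * f j) + b * (\<Sum>j\<le>K. \<gamma>' q j * f j) else 0)
      - (if i = p then a * (\<Sum>j\<le>K. \<gamma>' p j * f j) else 0)
      - (if i = q then b * (\<Sum>j\<le>K. \<gamma>' q j * f j) else 0)" for i f
    unfolding \<gamma>_def using dist
    by (cases "i = l"; cases "i = p"; cases "i = q")
       (simp_all add: algebra_simps sum.distrib sum_subtractf sum_distrib_left)
  have "martingale_coupling w v \<gamma>"
    unfolding martingale_coupling_def
  proof (intro conjI allI impI)
    fix i j
    show "0 \<le> \<gamma> i j"
      unfolding \<gamma>_def using dist nn'[of p j] nn'[of q j] nn'[of l j] nn'[of i j] a b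
      by (cases "i = l"; cases "i = p"; cases "i = q")
         (auto simp: algebra_simps intro: mult_left_le_one_le add_nonneg_nonneg)
  next
    fix i assume i: "i \<le> K"
    have "a * (\<Sum>j\<le>K. \<gamma>' p j) = s * lam" "b * (\<Sum>j\<le>K. \<gamma>' q j) = s * (1-lam)"
      "a * (\<Sum>j\<le>K. \<gamma>' p j * g j) = s * lam * g p" "b * (\<Sum>j\<le>K. \<gamma>' q j * g j) = s * (1-lam) * g q"
      using row'[of p] row'[of q] bar'[of p] bar'[of q] pq a(1) b(1)
      by (simp_all add: mult.assoc[symmetric])
    note shares = this
    show "(\<Sum>j\<le>K. \<gamma> i j) = w i"
      using row_f[of i "\<lambda>_. 1", unfolded mult_1_right shares] row'[OF i] w'[of i] dist
      by (cases "i = l"; cases "i = p"; cases "i = q") (simp_all add: spread_dir_def algebra_simps)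
    have "s * lam * g p + s * (1 - lam) * g q = s * g l"
      using arg_cong[OF lam(3), of "(*) s"] by (simp add: algebra_simps)
    then show "(\<Sum>j\<le>K. \<gamma> i j * g j) = w i * g i"
      using row_f[of i g, unfolded shares] bar'[OF i] w'[of i] dist
      by (cases "i = l"; cases "i = p"; cases "i = q")
         (simp_all add: spread_dir_def algebra_simps w'p w'q w'l)
  next
    fix j assume j: "j \<le> K"
    have "(\<Sum>i\<le>K. \<gamma> i j) = (\<Sum>i\<le>K. \<gamma>' i j) + (a * \<gamma>' p j + b * \<gamma>' q j) - a * \<gamma>' p j - b * \<gamma>' q j"
      unfolding \<gamma>_def using pq by (simp add: sum.distrib sum_subtractf)
    then show "(\<Sum>i\<le>K. \<gamma> i j) = v j" using col'[OF j] by simp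
  qed
  then show ?thesis by blast
qed


lemma mean_preserving_weight:
  assumes "p < l" "l < q" "q \<le> K"
  defines "lam \<equiv> (g q - g l) / (g q - g p)"
  shows "0 < lam" "lam < 1" "lam * g p + (1-lam) * g q = g l"
proof -
  have "g p < g l" "g l < g q" using grid_less assms by auto
  then show "0 < lam" "lam < 1" unfolding lam_def by (auto simp: field_simps)
  have "lam * (g q - g p) = g q - g l" unfolding lam_def using \<open>g p < g l\<close> \<open>g l < g q\<close> by simp
  then show "lam * g p + (1-lam) * g q = g l" by algebra
qed

lemma spread_convex_dominated:
  assumes H: "convex_dominated w v" and pq: "p < l" "l < q" "q \<le> K" and s: "0 \<le> s" "s \<le> w l"
    and small: "\<And>i. p < i \<Longrightarrow> i < q \<Longrightarrow>
      s * tent (g p) (g l) (g q) (g i) \<le> call_fun g K v (g i) - call_fun g K w (g i)"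
  defines "lam \<equiv> (g q - g l) / (g q - g p)"
  shows "convex_dominated (\<lambda>i. w i + s * spread_dir p l q lam i) v"
proof -
  have lam: "0 < lam" "lam < 1" "lam * g p + (1-lam) * g q = g l"
    using mean_preserving_weight[OF pq] unfolding lam_def by auto
  have "g p < g l" "g l < g q" using grid_less pq by auto
  have "0 \<le> w i + s * spread_dir p l q lam i" if "i \<le> K" for i
    using H that s lam pq unfolding convex_dominated_def spread_dir_def
    by (cases "i = l"; cases "i = p"; cases "i = q") auto
  moreover have "call_fun g K (\<lambda>i. w i + s * spread_dir p l q lam i) (g i) \<le> call_fun g K v (g i)"
    if "i \<le> K" for i
  proof (cases "p < i \<and> i < q")
    case True
    then show ?thesis using small call_fun_spread[OF pq] unfolding lam_def by fastforce
  next
    case False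
    then have "i \<le> p \<or> q \<le> i" by auto
    then have "g i \<le> g p \<or> g q \<le> g i" using grid_le that pq by auto
    then have "tent (g p) (g l) (g q) (g i) = 0"
      using tent_left tent_right \<open>g p < g l\<close> \<open>g l < g q\<close> by blast
    then show ?thesis using H that call_fun_spread[OF pq] unfolding lam_def convex_dominated_def
      by simp
  qed
  moreover have "(\<Sum>i\<le>K. spread_dir p l q lam i) = 0" "(\<Sum>i\<le>K. g i * spread_dir p l q lam i) = 0"
    using sum_spread_dir[of p l q lam "\<lambda>_. 1"] sum_spread_dir[of p l q lam g] pq lam(3)
    by (simp_all add: mult.commute)
  ultimately show ?thesis
    using H unfolding convex_dominated_def
    by (simp add: sum.distrib algebra_simps sum_distrib_left[symmetric])
qed


lemma call_gap_measure_less: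
  assumes "\<And>i. call_fun g K w (g i) \<le> call_fun g K w' (g i)"
    and "\<And>i. call_fun g K w' (g i) < call_fun g K v (g i) \<Longrightarrow> 0 < w' i \<Longrightarrow> 0 < w i"
    and "\<exists>i\<le>K. call_fun g K w (g i) < call_fun g K v (g i) \<and>
      (\<not> call_fun g K w' (g i) < call_fun g K v (g i) \<or> 0 < w i \<and> \<not> 0 < w' i)"
  shows "call_gap_measure v w' < call_gap_measure v w"
proof -
  define D where "D x = {i\<in>{..K}. call_fun g K x (g i) < call_fun g K v (g i)}" for x
  define E where "E x = {i\<in>D x. 0 < x i}" for x
  have measure: "call_gap_measure v x = card (D x) + card (E x)" for x
    unfolding call_gap_measure_def D_def E_def by (simp add: conj_assoc)
  have fin: "finite (D x)" "finite (E x)" for x unfolding D_def E_def by auto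
  have DD: "D w' \<subseteq> D w" unfolding D_def using assms(1) by (auto intro: order.strict_trans1)
  moreover have EE: "E w' \<subseteq> E w" unfolding E_def using DD assms(2) unfolding D_def by auto
  moreover have "D w' \<subset> D w \<or> E w' \<subset> E w" using assms(3) DD EE unfolding E_def D_def by blast
  ultimately show ?thesis
    unfolding measure using fin card_mono psubset_card_mono
    by (metis add_le_less_mono add_less_le_mono)
qed

lemma convex_dominated_spread_step:
  assumes H: "convex_dominated w v" and pq: "p < l" "l < q" "q \<le> K"
    and dp: "call_fun g K w (g p) = call_fun g K v (g p)"
    and dq: "call_fun g K w (g q) = call_fun g K v (g q)"
    and drun: "\<forall>i. p < i \<and> i < q \<longrightarrow> call_fun g K w (g i) < call_fun g K v (g i)"
    and wl: "w l > 0"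
  defines "lam \<equiv> (g q - g l) / (g q - g p)"
  shows "\<exists>s>0. convex_dominated (\<lambda>i. w i + s * spread_dir p l q lam i) v \<and>
    call_gap_measure v (\<lambda>i. w i + s * spread_dir p l q lam i) < call_gap_measure v w"
proof -
  have "g p < g l" "g l < g q" using grid_less pq by auto
  define T where "T i = tent (g p) (g l) (g q) (g i)" for i
  define d where "d i = call_fun g K v (g i) - call_fun g K w (g i)" for i
  have Tpos: "T i > 0" if "p < i" "i < q" for i
    using grid_less[of p i] grid_less[of i q] that pq tent_pos \<open>g p < g l\<close> \<open>g l < g q\<close>
    unfolding T_def by simp
  have T0: "T i = 0" if "i \<le> K" "\<not> (p < i \<and> i < q)" for i
    using that grid_le[of i p] grid_le[of q i] pq tent_left tent_right \<open>g p < g l\<close> \<open>g l < g q\<close>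
    unfolding T_def by (cases "i \<le> p") auto
  text \<open>The largest spread that keeps the call functions below those of \<open>v\<close> and the weights
    nonnegative.\<close>
  define S where "S = (\<lambda>i. d i / T i) ` {p<..<q}"
  have S: "finite S" "S \<noteq> {}" "\<forall>x\<in>S. x > 0" unfolding S_def d_def using pq drun Tpos by auto
  define s where "s = min (w l) (Min S)"
  have s: "0 < s" "s \<le> w l" unfolding s_def using wl S Min_in by auto
  have sT: "s * T i \<le> d i" if "p < i" "i < q" for i
  proof -
    have "s \<le> d i / T i" unfolding s_def S_def using S that
      by (auto simp: S_def intro: min.coboundedI2)
    then show ?thesis using Tpos[OF that] by (simp add: field_simps)
  qed
  define w' where "w' i = w i + s * spread_dir p l q lam i" for i
  have w'call: "call_fun g K w' (g i) = call_fun g K w (g i) + s * T i" for i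
    unfolding w'_def lam_def T_def using call_fun_spread[OF pq] by simp
  have H': "convex_dominated w' v"
    unfolding w'_def lam_def using sT s
    by (intro spread_convex_dominated[OF H pq]) (auto simp: T_def d_def)
  have "call_fun g K w (g i) \<le> call_fun g K w' (g i)" for i
    unfolding w'call T_def using s tent_nonneg \<open>g p < g l\<close> \<open>g l < g q\<close> by simp
  moreover have "0 < w i" if "call_fun g K w' (g i) < call_fun g K v (g i)" "0 < w' i" for i
  proof -
    have "i \<noteq> p" "i \<noteq> q" using that T0 dp dq pq unfolding w'call by auto
    then show ?thesis using that s unfolding w'_def spread_dir_def by (cases "i = l") auto
  qed
  moreover have "\<exists>i\<le>K. call_fun g K w (g i) < call_fun g K v (g i) \<and>
      (\<not> call_fun g K w' (g i) < call_fun g K v (g i) \<or> 0 < w i \<and> \<not> 0 < w' i)"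
  proof (cases "s = w l")
    case True
    then show ?thesis using drun pq wl unfolding w'_def spread_dir_def by (intro exI[of _ l]) auto
  next
    case False
    then have "s = Min S" unfolding s_def by (auto simp: min_def split: if_splits)
    then have "s \<in> S" using S Min_in by simp
    then obtain i where i: "p < i" "i < q" "s = d i / T i" unfolding S_def by auto
    then show ?thesis unfolding w'call d_def using Tpos[OF i(1,2)] drun pq
      by (intro exI[of _ i]) auto
  qed
  ultimately have "call_gap_measure v w' < call_gap_measure v w"
    by (rule call_gap_measure_less)
  then show ?thesis using H' s unfolding w'_def by blast
qed

theorem martingale_coupling_if_convex_dominated:
  assumes "convex_dominated w v"
  shows "\<exists>\<gamma>. martingale_coupling w v \<gamma>"
  using assms
proof (induction "call_gap_measure v w" arbitrary: w rule: less_induct)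
  case less
  have wnn: "\<forall>i\<le>K. 0 \<le> w i" and vnn: "\<forall>i\<le>K. 0 \<le> v i" and mass: "(\<Sum>i\<le>K. w i) = (\<Sum>i\<le>K. v i)"
    and mean: "(\<Sum>i\<le>K. w i * g i) = (\<Sum>i\<le>K. v i * g i)"
    and below: "\<forall>l\<le>K. call_fun g K w (g l) \<le> call_fun g K v (g l)"
    using less.prems unfolding convex_dominated_def by auto
  show ?case
  proof (cases "\<forall>l\<le>K. call_fun g K w (g l) = call_fun g K v (g l)")
    case True
    then have "\<forall>i\<le>K. w i = v i" using weights_eq_if_call_fun_eq mass by blast
    moreover have "\<And>P (x::real) y. (if P then x else 0) * y = (if P then x * y else 0)" by simp
    ultimately have "martingale_coupling w v (\<lambda>i j. if i = j \<and> i \<le> K then v i else 0)"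
      unfolding martingale_coupling_def using vnn by auto
    then show ?thesis by blast
  next
    case False
    then obtain l0 where l0: "l0 \<le> K" "call_fun g K w (g l0) < call_fun g K v (g l0)"
      using below by (meson order.not_eq_order_implies_strict)
    define d where "d l = call_fun g K v (g l) - call_fun g K w (g l)" for l
    have "d 0 = 0" "d K = 0" "\<forall>l\<le>K. 0 \<le> d l"
      unfolding d_def using call_fun_bottom[of w] call_fun_bottom[of v] call_fun_top mass mean below
      by simp_all
    then obtain p q where pq: "p < l0" "l0 < q" "q \<le> K" "d p = 0" "d q = 0"
      "\<forall>i. p < i \<and> i < q \<longrightarrow> d i > 0"
      using positive_run_around[of d K l0] l0 unfolding d_def by auto
    then obtain l where l: "p < l" "l < q" "w l > 0"
      using weight_between_if_call_fun_less[OF wnn vnn pq(1,2,3)] l0(2) unfolding d_def by auto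
    define lam where "lam = (g q - g l) / (g q - g p)"
    obtain s where s: "0 < s" and H': "convex_dominated (\<lambda>i. w i + s * spread_dir p l q lam i) v"
      and smaller: "call_gap_measure v (\<lambda>i. w i + s * spread_dir p l q lam i)
            < call_gap_measure v w"
      using convex_dominated_spread_step[OF less.prems l(1,2) pq(3) _ _ _ l(3)] pq(4-6)
      unfolding d_def lam_def by auto
    obtain \<gamma>' where "martingale_coupling (\<lambda>i. w i + s * spread_dir p l q lam i) v \<gamma>'"
      using less.hyps[OF smaller H'] by blast
    then show ?thesis
      using martingale_coupling_of_spread[OF _ refl l(1,2) pq(3)
              mean_preserving_weight[OF l(1,2) pq(3)] s]
        wnn l pq unfolding lam_def by auto
  qed
qed

end

section \<open>Weights with prescribed call functions\<close>

lemma convex_chord: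
  fixes a b x fa fb fx :: real
  assumes "a < x" "x < b"
    and "\<And>lam. 0 \<le> lam \<Longrightarrow> lam \<le> 1 \<Longrightarrow> x = lam * a + (1-lam) * b \<Longrightarrow> fx \<le> lam * fa + (1-lam) * fb"
  shows "fx * (b - a) \<le> fa * (b - x) + fb * (x - a)"
proof -
  define lam where "lam = (b - x) / (b - a)"
  have lam: "0 \<le> lam" "lam \<le> 1" "lam * (b - a) = b - x" unfolding lam_def using assms
    by (auto simp: field_simps)
  then have "x = lam * a + (1-lam) * b" by algebra
  then have "fx * (b - a) \<le> (lam * fa + (1-lam) * fb) * (b - a)"
    using assms lam by (simp add: mult_right_mono)
  also have "\<dots> = fa * (lam * (b-a)) + fb * ((b - a) - lam * (b - a))" by (simp add: algebra_simps)
  also have "\<dots> = fa * (b - x) + fb * (x - a)" unfolding lam(3) by simp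
  finally show ?thesis .
qed

context increasing_grid
begin

definition grid_split :: "real \<Rightarrow> (nat \<Rightarrow> real) \<Rightarrow> bool" where
  "grid_split x lam \<longleftrightarrow> (\<forall>i. 0 \<le> lam i) \<and> (\<Sum>i\<le>K. lam i) = 1 \<and> (\<Sum>i\<le>K. lam i * g i) = x
     \<and> (\<forall>l\<le>K. call_fun g K lam (g l) = max 0 (x - g l))"

lemma call_fun_grid_convex:
  assumes "\<forall>i\<le>K. 0 \<le> w i" "0 < l" "l < K"
  shows "call_fun g K w (g l) * (g (l+1) - g (l-1)) \<le>
    call_fun g K w (g (l-1)) * (g (l+1) - g l) + call_fun g K w (g (l+1)) * (g l - g (l-1))"
proof (rule convex_chord)
  show "g (l-1) < g l" "g l < g (l+1)" using grid_less assms by auto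
  fix lam :: real assume "0 \<le> lam" "lam \<le> 1" "g l = lam * g (l - 1) + (1 - lam) * g (l + 1)"
  then show "call_fun g K w (g l) \<le> lam * call_fun g K w (g (l - 1))
        + (1 - lam) * call_fun g K w (g (l + 1))"
    using call_fun_convex[OF assms(1)] by metis
qed

text \<open>The tail masses of the weights are the negated slopes of \<open>c\<close>.\<close>

lemma exists_weights_with_call_fun:
  fixes c :: "nat \<Rightarrow> real" and M :: real
  assumes K1: "1 \<le> K" and cK: "c K = 0" and cK1: "0 \<le> c (K-1)"
    and convex: "\<forall>l. 0 < l \<and> l < K \<longrightarrow>
      c l * (g (l+1) - g (l-1)) \<le> c (l-1) * (g (l+1) - g l) + c (l+1) * (g l - g (l-1))"
    and start: "c 0 - c 1 \<le> (g 1 - g 0) * M"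
  shows "\<exists>v. (\<forall>i\<le>K. 0 \<le> v i) \<and> (\<Sum>i\<le>K. v i) = M \<and> (\<forall>l\<le>K. call_fun g K v (g l) = c l)"
proof -
  define S where "S l = (if l = 0 then M
        else if l \<le> K then (c (l-1) - c l) / (g l - g (l-1)) else 0)" for l
  define v where "v l = S l - S (Suc l)" for l
  have gd: "g (l-1) < g l" if "1 \<le> l" "l \<le> K" for l using grid_less that by simp
  have tail: "(\<Sum>i\<in>{l..K}. v i) = S l" if "l \<le> K" for l
  proof -
    have "(\<Sum>i\<in>{l..K}. v i) = - (\<Sum>i\<in>{l..K}. S (Suc i) - S i)" unfolding v_def
      by (simp add: sum_negf[symmetric])
    also have "\<dots> = S l - S (Suc K)" using sum_Suc_diff[of l K S] that by simp
    finally show ?thesis unfolding S_def by simp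
  qed
  have "0 \<le> v i" if i: "i \<le> K" for i
  proof -
    consider "i = 0" | "0 < i \<and> i < K" | "i = K" using i by linarith
    then show "0 \<le> v i"
    proof cases
      case 1
      have "(c 0 - c 1) / (g 1 - g 0) \<le> M" using start gd[of 1] K1
        by (simp add: divide_le_eq mult.commute)
      then show ?thesis using 1 K1 unfolding v_def S_def by simp
    next
      case 2
      have "g (i-1) < g i" "g i < g (i+1)" using grid_less 2 by auto
      then have "(c i - c (i+1)) / (g (i+1) - g i) \<le> (c (i-1) - c i) / (g i - g (i-1))"
        using convex 2 by (simp add: divide_simps) (simp add: algebra_simps)
      then show ?thesis using 2 unfolding v_def S_def by simp
    next
      case 3
      have "0 \<le> (c (K-1) - c K) / (g K - g (K-1))" using cK cK1 gd[of K] K1 by simp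
      then show ?thesis using 3 K1 unfolding v_def S_def by simp
    qed
  qed
  moreover have "(\<Sum>i\<le>K. v i) = M" using tail[of 0] unfolding S_def by (simp add: atLeast0AtMost)
  moreover have "call_fun g K v (g (K - k)) = c (K - k)" if "k \<le> K" for k
    using that
  proof (induction k)
    case 0 then show ?case using call_fun_top cK by simp
  next
    case (Suc k)
    define l where "l = K - k"
    have l: "1 \<le> l" "l \<le> K" and e: "K - Suc k = l - 1" using Suc l_def by auto
    have "call_fun g K v (g (l-1)) = call_fun g K v (g l) + (g l - g (l-1)) * S l"
      using call_fun_diff[OF l, of v] tail[OF l(2)] by simp
    also have "\<dots> = c (l-1)" using Suc l l_def gd[OF l] unfolding S_def by simp
    finally show ?case unfolding e .
  qed
  then have "\<forall>l\<le>K. call_fun g K v (g l) = c l" by (metis diff_diff_cancel diff_le_self)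
  ultimately show ?thesis by blast
qed

lemma exists_grid_split:
  assumes K1: "1 \<le> K" and x: "g 0 \<le> x" "x \<le> g K"
  shows "\<exists>lam. grid_split x lam"
proof -
  define Z where "Z = {s. s < K \<and> g s \<le> x}"
  have "0 \<in> Z" "finite Z" unfolding Z_def using K1 x by auto
  define s where "s = Max Z"
  have "s \<in> Z" unfolding s_def using \<open>0 \<in> Z\<close> \<open>finite Z\<close> Max_in by blast
  then have sK: "s < K" and gs: "g s \<le> x" unfolding Z_def by auto
  have "Suc s \<notin> Z" using \<open>finite Z\<close> s_def Max_ge by (metis Suc_n_not_le_n)
  then have gs1: "x \<le> g (Suc s)" using x sK unfolding Z_def by (cases "Suc s = K") auto
  have gss: "g s < g (Suc s)" using grid_step sK by simp
  define A where "A = (g (Suc s) - x) / (g (Suc s) - g s)"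
  define B where "B = (x - g s) / (g (Suc s) - g s)"
  have "A + B = ((g (Suc s) - x) + (x - g s)) / (g (Suc s) - g s)"
    unfolding A_def B_def by (rule add_divide_distrib[symmetric])
  then have AB1: "0 \<le> A" "0 \<le> B" "A + B = 1" unfolding A_def B_def using gs gs1 gss by auto
  have "B * (g (Suc s) - g s) = x - g s" unfolding B_def using gss by simp
  then have "A * g s + B * g (Suc s) = x" using AB1(3) by algebra
  note AB = AB1 this
  define lam where "lam i = (if i = s then A else 0) + (if i = Suc s then B else 0)" for i
  have sumf: "(\<Sum>i\<le>K. lam i * f i) = A * f s + B * f (Suc s)" for f
  proof -
    have "\<And>P (a::real) b. (if P then a else 0) * b = (if P then a * b else 0)" by simp
    then show ?thesis unfolding lam_def using sK by (simp add: distrib_right sum.distrib)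
  qed
  have "call_fun g K lam (g l) = max 0 (x - g l)" if l: "l \<le> K" for l
  proof (cases "l \<le> s")
    case True
    then have "g l \<le> g s" using grid_le sK by simp
    then have "call_fun g K lam (g l) = A * (g s - g l) + B * (g (Suc s) - g l)"
      unfolding call_fun_def using sumf gss by simp
    also have "\<dots> = (A * g s + B * g (Suc s)) - (A + B) * g l" by (simp add: algebra_simps)
    finally have "call_fun g K lam (g l) = (A * g s + B * g (Suc s)) - (A + B) * g l" .
    then show ?thesis using AB \<open>g l \<le> g s\<close> gs by simp
  next
    case False
    then have "g (Suc s) \<le> g l" using grid_le l by simp
    then show ?thesis unfolding call_fun_def using sumf gss gs1 by simp
  qed
  moreover have "\<forall>i. 0 \<le> lam i" unfolding lam_def using AB by simp
  ultimately have "grid_split x lam" unfolding grid_split_def using sumf[of "\<lambda>_. 1"] sumf[of g] AB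
    by simp
  then show ?thesis by blast
qed

end

lemma abs_eu_le:
  assumes "is_dist A \<alpha>" "finite A"
  shows "\<bar>eu A u \<theta> \<alpha>\<bar> \<le> (\<Sum>a\<in>A. \<bar>u \<theta> a\<bar>)"
proof -
  have "\<bar>\<alpha> a\<bar> \<le> 1" if "a \<in> A" for a
    using assms that member_le_sum[of a A \<alpha>] unfolding is_dist_def by auto
  then have "\<bar>\<alpha> a * u \<theta> a\<bar> \<le> \<bar>u \<theta> a\<bar>" if "a \<in> A" for a
    using that by (simp add: abs_mult mult_left_le_one_le)
  then have "(\<Sum>a\<in>A. \<bar>\<alpha> a * u \<theta> a\<bar>) \<le> (\<Sum>a\<in>A. \<bar>u \<theta> a\<bar>)" by (rule sum_mono)
  then show ?thesis unfolding eu_def using sum_abs[of "\<lambda>a. \<alpha> a * u \<theta> a" A] by linarith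
qed

lemma abs_payoff_le:
  assumes Q: "Q \<in> couplings Th m Y P" and \<sigma>: "\<sigma> \<in> strategies A (profiles m Y)"
    and fin: "finite A" "finite Th"
  shows "\<bar>payoff Th A u (profiles m Y) Q \<sigma>\<bar> \<le> (\<Sum>\<theta>\<in>Th. \<Sum>a\<in>A. \<bar>u \<theta> a\<bar>)"
proof -
  have "\<bar>\<Sum>y\<in>profiles m Y. Q \<theta> y * eu A u \<theta> (\<sigma> y)\<bar> \<le> (\<Sum>a\<in>A. \<bar>u \<theta> a\<bar>)" if "\<theta> \<in> Th" for \<theta>
  proof -
    have "is_dist (profiles m Y) (Q \<theta>)" using Q that unfolding couplings_def by blast
    then have Q\<theta>: "\<forall>y\<in>profiles m Y. 0 \<le> Q \<theta> y" "sum (Q \<theta>) (profiles m Y) = 1"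
      unfolding is_dist_def by auto
    have "\<bar>\<Sum>y\<in>profiles m Y. Q \<theta> y * eu A u \<theta> (\<sigma> y)\<bar> \<le> (\<Sum>y\<in>profiles m Y. \<bar>Q \<theta> y * eu A u \<theta> (\<sigma> y)\<bar>)"
      by (rule sum_abs)
    also have "\<dots> \<le> (\<Sum>y\<in>profiles m Y. Q \<theta> y * (\<Sum>a\<in>A. \<bar>u \<theta> a\<bar>))"
    proof (rule sum_mono)
      fix y assume y: "y \<in> profiles m Y"
      have "is_dist A (\<sigma> y)" using \<sigma> y unfolding strategies_def by blast
      then have "\<bar>eu A u \<theta> (\<sigma> y)\<bar> \<le> (\<Sum>a\<in>A. \<bar>u \<theta> a\<bar>)" using fin(1) by (rule abs_eu_le)
      then show "\<bar>Q \<theta> y * eu A u \<theta> (\<sigma> y)\<bar> \<le> Q \<theta> y * (\<Sum>a\<in>A. \<bar>u \<theta> a\<bar>)"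
        using Q\<theta>(1) y by (simp add: abs_mult abs_of_nonneg mult_left_mono)
    qed
    also have "\<dots> = (\<Sum>a\<in>A. \<bar>u \<theta> a\<bar>)" using Q\<theta>(2) by (simp flip: sum_distrib_right)
    finally show ?thesis .
  qed
  then have "(\<Sum>\<theta>\<in>Th. \<bar>\<Sum>y\<in>profiles m Y. Q \<theta> y * eu A u \<theta> (\<sigma> y)\<bar>) \<le> (\<Sum>\<theta>\<in>Th. \<Sum>a\<in>A. \<bar>u \<theta> a\<bar>)"
    by (rule sum_mono)
  then show ?thesis unfolding payoff_def using sum_abs by (rule order.trans[rotated])
qed

lemma guarantee_le_payoff:
  assumes "Q \<in> couplings Th m Y P" "\<sigma> \<in> strategies A (profiles m Y)" "finite A" "finite Th"
  shows "guarantee Th A u m Y P \<sigma> \<le> payoff Th A u (profiles m Y) Q \<sigma>"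
  unfolding guarantee_def
proof (rule cINF_lower[OF _ assms(1)])
  have "- (\<Sum>\<theta>\<in>Th. \<Sum>a\<in>A. \<bar>u \<theta> a\<bar>) \<le> payoff Th A u (profiles m Y) Q' \<sigma>"
    if "Q' \<in> couplings Th m Y P" for Q'
    using abs_payoff_le[OF that assms(2-4), of u] by (simp add: abs_le_iff)
  then show "bdd_below ((\<lambda>Q. payoff Th A u (profiles m Y) Q \<sigma>) ` couplings Th m Y P)"
    by (rule bdd_belowI2)
qed

lemma guarantee_greatest:
  assumes "couplings Th m Y P \<noteq> {}"
    and "\<And>Q. Q \<in> couplings Th m Y P \<Longrightarrow> b \<le> payoff Th A u (profiles m Y) Q \<sigma>"
  shows "b \<le> guarantee Th A u m Y P \<sigma>"
  unfolding guarantee_def by (rule cINF_greatest) (use assms in auto)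

lemma guarantee_le_Vrob:
  assumes "Q \<in> couplings Th m Y P" "\<sigma> \<in> strategies A (profiles m Y)" "finite A" "finite Th"
  shows "guarantee Th A u m Y P \<sigma> \<le> Vrob Th A u m Y P"
  unfolding Vrob_def
proof (rule cSUP_upper[OF assms(2)])
  have "guarantee Th A u m Y P \<sigma>' \<le> (\<Sum>\<theta>\<in>Th. \<Sum>a\<in>A. \<bar>u \<theta> a\<bar>)"
      if "\<sigma>' \<in> strategies A (profiles m Y)" for \<sigma>'
    using guarantee_le_payoff[OF assms(1) that assms(3,4), of u]
          abs_payoff_le[OF assms(1) that assms(3,4), of u]
    by linarith
  then show "bdd_above (guarantee Th A u m Y P ` strategies A (profiles m Y))"
    by (rule bdd_aboveI2)
qed

lemma Vrob_least:
  assumes "strategies A (profiles m Y) \<noteq> {}"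
    and "\<And>\<sigma>. \<sigma> \<in> strategies A (profiles m Y) \<Longrightarrow> guarantee Th A u m Y P \<sigma> \<le> b"
  shows "Vrob Th A u m Y P \<le> b"
  unfolding Vrob_def by (rule cSUP_least) (use assms in auto)

lemma payoff_le_V1:
  assumes "finite A" "\<forall>\<theta>\<in>Th. is_dist Y (P \<theta>)" "\<forall>y\<in>Y. is_dist A (\<tau> y)"
  shows "(\<Sum>\<theta>\<in>Th. \<Sum>y\<in>Y. P \<theta> y * eu A u \<theta> (\<tau> y)) \<le> V1 Th A u Y P"
  unfolding V1_def
proof (rule cSUP_upper)
  show "\<tau> \<in> {\<sigma>. \<forall>y\<in>Y. is_dist A (\<sigma> y)}" using assms by auto
  have "(\<Sum>\<theta>\<in>Th. \<Sum>y\<in>Y. P \<theta> y * eu A u \<theta> (\<sigma> y)) \<le> (\<Sum>\<theta>\<in>Th. \<Sum>y\<in>Y. P \<theta> y * (\<Sum>a\<in>A. \<bar>u \<theta> a\<bar>))"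
    if \<sigma>: "\<sigma> \<in> {\<sigma>. \<forall>y\<in>Y. is_dist A (\<sigma> y)}" for \<sigma>
  proof (intro sum_mono mult_left_mono)
    fix \<theta> y assume "\<theta> \<in> Th" "y \<in> Y"
    then show "0 \<le> P \<theta> y" using assms(2) unfolding is_dist_def by auto
    have "is_dist A (\<sigma> y)" using \<sigma> \<open>y \<in> Y\<close> by blast
    from abs_eu_le[OF this assms(1)] show "eu A u \<theta> (\<sigma> y) \<le> (\<Sum>a\<in>A. \<bar>u \<theta> a\<bar>)"
      by (rule abs_le_D1)
  qed
  then show "bdd_above ((\<lambda>\<sigma>. \<Sum>\<theta>\<in>Th. \<Sum>y\<in>Y. P \<theta> y * eu A u \<theta> (\<sigma> y)) ` {\<sigma>. \<forall>y\<in>Y. is_dist A (\<sigma> y)})"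
    by (rule bdd_aboveI2)
qed

lemma payoff_marginal_strategy:
  assumes Q: "Q \<in> couplings Th m Y P" and j: "j < m" "\<theta> \<in> Th" and fin: "\<forall>i<m. finite (Y i)"
  shows "(\<Sum>y\<in>profiles m Y. Q \<theta> y * f (y j)) = (\<Sum>c\<in>Y j. P j \<theta> c * f c)"
proof -
  have "finite (profiles m Y)" unfolding profiles_def using fin by (intro finite_PiE) auto
  then have "(\<Sum>y\<in>profiles m Y. Q \<theta> y * f (y j)) =
      (\<Sum>c\<in>Y j. \<Sum>y\<in>{y \<in> profiles m Y. y j = c}. Q \<theta> y * f (y j))"
    using fin j by (intro sum.group[symmetric]) (auto simp: profiles_def PiE_iff)
  also have "\<dots> = (\<Sum>c\<in>Y j. (\<Sum>y\<in>{y \<in> profiles m Y. y j = c}. Q \<theta> y) * f c)"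
    by (simp add: sum_distrib_right)
  also have "\<dots> = (\<Sum>c\<in>Y j. P j \<theta> c * f c)"
    using Q j unfolding couplings_def by auto
  finally show ?thesis .
qed

lemma V1_le_Vrob:
  assumes "j < m" "couplings Th m Y P \<noteq> {}" "\<forall>i<m. finite (Y i)" "finite Th" "finite A" "A \<noteq> {}"
  shows "V1 Th A u (Y j) (P j) \<le> Vrob Th A u m Y P"
  unfolding V1_def
proof (rule cSUP_least)
  obtain a where "a \<in> A" using assms by auto
  then have "is_dist A (\<lambda>b. if b = a then 1 else 0)"
    using assms unfolding is_dist_def by auto
  then show "{\<sigma>. \<forall>y\<in>Y j. is_dist A (\<sigma> y)} \<noteq> {}" by auto
  fix \<tau> assume \<tau>: "\<tau> \<in> {\<sigma>. \<forall>y\<in>Y j. is_dist A (\<sigma> y)}"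
  have \<sigma>: "(\<lambda>y. \<tau> (y j)) \<in> strategies A (profiles m Y)"
    using \<tau> assms(1) unfolding strategies_def profiles_def by (auto simp: PiE_iff)
  obtain Q where Q: "Q \<in> couplings Th m Y P" using assms(2) by blast
  have "(\<Sum>\<theta>\<in>Th. \<Sum>c\<in>Y j. P j \<theta> c * eu A u \<theta> (\<tau> c)) \<le> guarantee Th A u m Y P (\<lambda>y. \<tau> (y j))"
  proof (rule guarantee_greatest[OF assms(2)])
    fix Q' assume Q': "Q' \<in> couplings Th m Y P"
    have "(\<Sum>y\<in>profiles m Y. Q' \<theta> y * eu A u \<theta> (\<tau> (y j))) = (\<Sum>c\<in>Y j. P j \<theta> c * eu A u \<theta> (\<tau> c))"
      if "\<theta> \<in> Th" for \<theta>
      using payoff_marginal_strategy[OF Q' assms(1) that assms(3), of "\<lambda>c. eu A u \<theta> (\<tau> c)"] .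
    then show "(\<Sum>\<theta>\<in>Th. \<Sum>c\<in>Y j. P j \<theta> c * eu A u \<theta> (\<tau> c))
          \<le> payoff Th A u (profiles m Y) Q' (\<lambda>y. \<tau> (y j))"
      unfolding payoff_def by simp
  qed
  also have "\<dots> \<le> Vrob Th A u m Y P" using guarantee_le_Vrob[OF Q \<sigma> assms(5,4)] .
  finally show "(\<Sum>\<theta>\<in>Th. \<Sum>c\<in>Y j. P j \<theta> c * eu A u \<theta> (\<tau> c)) \<le> Vrob Th A u m Y P" .
qed

lemma eu_ustar: "eu {0,1} (ustar u l) \<theta> \<alpha> = \<alpha> 1 * (u \<theta> (Suc l) - u \<theta> l)"
  unfolding eu_def ustar_def by simp

lemma two_point_mixture:
  assumes "x \<in> S" "y \<in> S" "x \<noteq> y" "finite S" "0 \<le> L" "L \<le> 1"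
  defines "\<alpha> \<equiv> \<lambda>z. (if z = x then L else 0) + (if z = y then 1 - L else 0)"
  shows "is_dist S \<alpha>" "eu S u \<theta> \<alpha> = L * u \<theta> x + (1 - L) * u \<theta> y"
proof -
  have "(\<Sum>z\<in>S. \<alpha> z * f z) = L * f x + (1 - L) * f y" for f
  proof -
    have "(\<Sum>z\<in>S. \<alpha> z * f z) = (\<Sum>z\<in>S. (if z = x then L * f x else 0)
            + (if z = y then (1 - L) * f y else 0))"
      using assms(3) by (intro sum.cong) (auto simp: \<alpha>_def)
    then show ?thesis using assms by (simp add: sum.distrib)
  qed
  from this[of "\<lambda>_. 1"] this[of "u \<theta>"] show "is_dist S \<alpha>" "eu S u \<theta> \<alpha> = L * u \<theta> x + (1 - L) * u \<theta> y"
    unfolding is_dist_def eu_def \<alpha>_def using assms by auto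
qed

lemma ratio_less_if_above_mixture:
  fixes a b c e U :: real
  assumes "a > 0" "b > 0" "c > 0" "e > 0"
    and "U > (b/(a+b)) * (U + c) + (1 - b/(a+b)) * (U - e)"
  shows "c/(a+c) < e/(b+e)"
proof -
  define L where "L = b/(a+b)"
  have L: "L * (a+b) = b" unfolding L_def using assms by simp
  have "L * c < (1 - L) * e" using assms(5) unfolding L_def[symmetric] by (simp add: algebra_simps)
  then have "L * c * (a+b) < (1 - L) * e * (a+b)" using assms by simp
  moreover have "L * c * (a+b) = (L * (a+b)) * c" "(1 - L) * e * (a+b) = ((a+b) - L * (a+b)) * e"
    by (simp_all add: algebra_simps)
  then have "L * c * (a+b) = b * c" "(1 - L) * e * (a+b) = a * e" unfolding L by simp_all
  ultimately have "b * c < a * e" by simp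
  then show ?thesis using assms by (simp add: divide_simps) (simp add: algebra_simps)
qed

locale two_state_problem =
  fixes u :: "nat \<Rightarrow> nat \<Rightarrow> real"
    and n m :: nat
    and Y :: "nat \<Rightarrow> 'y set"
    and P :: "nat \<Rightarrow> nat \<Rightarrow> 'y \<Rightarrow> real"
  assumes n: "n \<ge> 1" and m: "m \<ge> 1"
    and exps: "\<forall>j<m. is_experiment {1,2} (Y j) (P j)"
    and incr1: "\<forall>i\<in>{1..<n}. u 1 i < u 1 (Suc i)"
    and decr2: "\<forall>i\<in>{1..<n}. u 2 i > u 2 (Suc i)"
    and norm: "u 1 1 = 0" "u 2 1 = 0"
    and undom: "\<forall>i\<in>{1..n}. \<not> weakly_star_dominated {1,2} {1..n} u i"
begin

definition inc1 :: "nat \<Rightarrow> real" where "inc1 l = u 1 (Suc l) - u 1 l"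
definition inc2 :: "nat \<Rightarrow> real" where "inc2 l = u 2 (Suc l) - u 2 l"

text \<open>For \<open>0 < l < n\<close>, \<open>threshold l\<close> is the posterior of state 1 at which \<open>a\<^sub>l\<close> and
  \<open>a\<^sub>l\<^sub>+\<^sub>1\<close> are indifferent; the values 0 and 1 at the ends close the grid.\<close>

definition threshold :: "nat \<Rightarrow> real" where
  "threshold l = (if l = 0 then 0 else if l < n then - inc2 l / (inc1 l - inc2 l) else 1)"

lemma inc1_pos: "1 \<le> l \<Longrightarrow> l < n \<Longrightarrow> inc1 l > 0"
  using incr1 unfolding inc1_def by auto

lemma inc2_neg: "1 \<le> l \<Longrightarrow> l < n \<Longrightarrow> inc2 l < 0"
  using decr2 unfolding inc2_def by auto

lemma threshold_less_middle:
  assumes "1 \<le> i" "Suc i < n"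
  shows "threshold i < threshold (Suc i)"
proof -
  define a b c e where "a = inc1 i" "b = inc1 (Suc i)" "c = - inc2 i" "e = - inc2 (Suc i)"
  have pos: "a > 0" "b > 0" "c > 0" "e > 0" unfolding a_b_c_e_def using inc1_pos inc2_neg assms
    by auto
  define L where "L = b/(a+b)"
  have "0 \<le> L" "L \<le> 1" unfolding L_def using pos by auto
  text \<open>Mixing \<open>a\<^sub>i\<close> and \<open>a\<^sub>i\<^sub>+\<^sub>2\<close> to match \<open>a\<^sub>i\<^sub>+\<^sub>1\<close> in state 1 must lose in state 2.\<close>
  define \<alpha> where "\<alpha> z = (if z = i then L else 0) + (if z = Suc (Suc i) then 1 - L else 0)" for z
  have mix: "i \<in> {1..n} - {Suc i}" "Suc (Suc i) \<in> {1..n} - {Suc i}" "i \<noteq> Suc (Suc i)"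
    using assms by auto
  have dist: "is_dist ({1..n} - {Suc i}) \<alpha>"
    and eu: "\<And>\<theta>. eu ({1..n} - {Suc i}) u \<theta> \<alpha> = L * u \<theta> i + (1 - L) * u \<theta> (Suc (Suc i))"
    unfolding \<alpha>_def using two_point_mixture[OF mix] \<open>0 \<le> L\<close> \<open>L \<le> 1\<close> by auto
  have "L * (a+b) = b" unfolding L_def using pos by simp
  moreover have "u 1 i = u 1 (Suc i) - a" "u 1 (Suc (Suc i)) = u 1 (Suc i) + b"
    unfolding a_b_c_e_def inc1_def by auto
  moreover have "L * (U - a) + (1 - L) * (U + b) = U - (L * (a+b) - b)" for U
    by (simp add: algebra_simps)
  ultimately have "eu ({1..n} - {Suc i}) u 1 \<alpha> = u 1 (Suc i)" unfolding eu by simp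
  moreover have "\<not> weakly_star_dominated {1,2} {1..n} u (Suc i)" using undom assms by auto
  ultimately have "\<not> (u 2 (Suc i) \<le> eu ({1..n} - {Suc i}) u 2 \<alpha>)"
    using dist unfolding weakly_star_dominated_def by auto
  then have "u 2 (Suc i) > L * (u 2 (Suc i) + c) + (1 - L) * (u 2 (Suc i) - e)"
    unfolding eu a_b_c_e_def inc2_def by simp
  then have "c/(a+c) < e/(b+e)" using ratio_less_if_above_mixture[OF pos] unfolding L_def by blast
  moreover have "threshold i = c/(a+c)" "threshold (Suc i) = e/(b+e)"
    unfolding threshold_def a_b_c_e_def using assms by (auto simp: algebra_simps)
  ultimately show ?thesis by simp
qed

lemma threshold_less_Suc: assumes "i < n" shows "threshold i < threshold (Suc i)"
proof -
  have pos: "0 < - inc2 l / (inc1 l - inc2 l)" and less1: "- inc2 l / (inc1 l - inc2 l) < 1"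
    if "1 \<le> l" "l < n" for l
    using inc1_pos[OF that] inc2_neg[OF that] by (simp_all add: divide_simps)
  consider "i = 0" | "1 \<le> i" "Suc i < n" | "1 \<le> i" "Suc i = n" using assms by linarith
  then show ?thesis
  proof cases
    case 1
    then show ?thesis using pos[of 1] unfolding threshold_def by (cases "n = 1") auto
  next
    case 2
    then show ?thesis by (rule threshold_less_middle)
  next
    case 3
    then show ?thesis using less1[of i] unfolding threshold_def by simp
  qed
qed

sublocale increasing_grid threshold n
  by unfold_locales (rule threshold_less_Suc)

lemma threshold_0: "threshold 0 = 0" and threshold_n: "threshold n = 1"
  unfolding threshold_def using n by auto

lemma threshold_bounds: "i \<le> n \<Longrightarrow> 0 \<le> threshold i \<and> threshold i \<le> 1"
  using grid_le[of 0 i] grid_le[of i n] threshold_0 threshold_n by auto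

lemma threshold_mult: assumes "1 \<le> l" "l < n" shows "threshold l * (inc1 l - inc2 l) = - inc2 l"
  using inc1_pos[OF assms] inc2_neg[OF assms] assms unfolding threshold_def by simp

end


section \<open>The worst-case coupling\<close>

lemma sum_PiE_fixed_prod:
  fixes Y :: "nat \<Rightarrow> 'y set" and f :: "nat \<Rightarrow> 'y \<Rightarrow> real"
  assumes "j < m" "c \<in> Y j" "\<forall>i<m. finite (Y i)"
  shows "(\<Sum>y\<in>{y \<in> PiE {..<m} Y. y j = c}. \<Prod>i<m. f i (y i)) =
    f j c * (\<Prod>i\<in>{..<m}-{j}. sum (f i) (Y i))"
proof -
  have "x \<in> PiE {..<m} Y \<and> x j = c \<longleftrightarrow> x \<in> PiE {..<m} (Y(j := {c}))" for x
    using assms(1,2) unfolding PiE_iff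
    by (metis fun_upd_other fun_upd_same lessThan_iff singletonD singletonI)
  then have "{y \<in> PiE {..<m} Y. y j = c} = PiE {..<m} (Y(j := {c}))" by blast
  moreover have "(\<Sum>y \<in> PiE {..<m} (Y(j := {c})). \<Prod>i<m. f i (y i))
        = (\<Prod>i<m. sum (f i) ((Y(j := {c})) i))"
    by (rule prod_sum_PiE[symmetric]) (use assms in auto)
  moreover have "\<dots> = sum (f j) ((Y(j := {c})) j) * (\<Prod>i\<in>{..<m}-{j}. sum (f i) ((Y(j := {c})) i))"
    using assms by (subst prod.remove[of _ j]) auto
  moreover have "\<dots> = f j c * (\<Prod>i\<in>{..<m}-{j}. sum (f i) (Y i))"
    by (auto intro!: prod.cong)
  ultimately show ?thesis by simp
qed

definition belief :: "nat \<Rightarrow> real \<Rightarrow> real" where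
  "belief \<theta> x = (if \<theta> = 1 then x else 1 - x)"

lemma sum_mult_belief:
  "(\<Sum>i\<in>A. w i * belief \<theta> (x i)) =
    (if \<theta> = 1 then (\<Sum>i\<in>A. w i * x i) else (\<Sum>i\<in>A. w i) - (\<Sum>i\<in>A. w i * x i))"
  unfolding belief_def by (simp add: right_diff_distrib sum_subtractf)

context two_state_problem
begin

lemma finite_signal_set: "j < m \<Longrightarrow> finite (Y j)"
  using exps unfolding is_experiment_def by auto

lemma P_nonneg: "j < m \<Longrightarrow> \<theta> \<in> {1,2} \<Longrightarrow> y \<in> Y j \<Longrightarrow> 0 \<le> P j \<theta> y"
  using exps unfolding is_experiment_def is_dist_def by blast

lemma sum_P: "j < m \<Longrightarrow> \<theta> \<in> {1,2} \<Longrightarrow> sum (P j \<theta>) (Y j) = 1"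
  using exps unfolding is_experiment_def is_dist_def by blast

text \<open>Signals are weighted by \<open>P j 1 y + P j 2 y\<close>, i.e.\ under the uniform prior scaled by 2;
  a signal of weight 0 gets the junk posterior 0, which is never seen.\<close>

definition signal_weight :: "nat \<Rightarrow> 'y \<Rightarrow> real" where
  "signal_weight j y = P j 1 y + P j 2 y"

definition posterior :: "nat \<Rightarrow> 'y \<Rightarrow> real" where
  "posterior j y = P j 1 y / signal_weight j y"

lemma signal_weight_nonneg: "j < m \<Longrightarrow> y \<in> Y j \<Longrightarrow> 0 \<le> signal_weight j y"
  unfolding signal_weight_def using P_nonneg by (simp add: add_nonneg_nonneg)

lemma posterior_bounds:
  assumes "j < m" "y \<in> Y j"
  shows "0 \<le> posterior j y" "posterior j y \<le> 1"
  unfolding posterior_def signal_weight_def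
  using P_nonneg[OF assms(1) _ assms(2), of 1] P_nonneg[OF assms(1) _ assms(2), of 2]
  by (auto simp: divide_le_eq_1)

lemma signal_weight_belief:
  assumes "j < m" "y \<in> Y j" "\<theta> \<in> {1,2}"
  shows "signal_weight j y * belief \<theta> (posterior j y) = P j \<theta> y"
proof (cases "signal_weight j y = 0")
  case True
  then show ?thesis
    using P_nonneg[OF assms(1) _ assms(2), of 1] P_nonneg[OF assms(1) _ assms(2), of 2] assms(3)
    unfolding signal_weight_def by auto
next
  case False
  then show ?thesis using assms(3) unfolding posterior_def belief_def
    by (auto simp: right_diff_distrib signal_weight_def)
qed

lemma signal_weight_posterior: "j < m \<Longrightarrow> y \<in> Y j \<Longrightarrow> signal_weight j y * posterior j y = P j 1 y"
  using signal_weight_belief[of j y 1] unfolding belief_def by simp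

definition posterior_split :: "nat \<Rightarrow> 'y \<Rightarrow> nat \<Rightarrow> real" where
  "posterior_split j y = (SOME lam. grid_split (posterior j y) lam)"

lemma posterior_split_spec:
  assumes "j < m" "y \<in> Y j"
  shows "grid_split (posterior j y) (posterior_split j y)"
proof -
  have "\<exists>lam. grid_split (posterior j y) lam"
    using exists_grid_split[of "posterior j y"] n posterior_bounds[OF assms] threshold_0 threshold_n
    by simp
  then show ?thesis unfolding posterior_split_def by (rule someI_ex)
qed

definition posterior_weights :: "nat \<Rightarrow> nat \<Rightarrow> real" where
  "posterior_weights j i = (\<Sum>y\<in>Y j. signal_weight j y * posterior_split j y i)"

abbreviation experiment_call :: "nat \<Rightarrow> nat \<Rightarrow> real" where
  "experiment_call j l \<equiv> call_fun threshold n (posterior_weights j) (threshold l)"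

lemma posterior_weights_nonneg: "j < m \<Longrightarrow> 0 \<le> posterior_weights j i"
  unfolding posterior_weights_def using signal_weight_nonneg posterior_split_spec
  unfolding grid_split_def by (auto intro!: sum_nonneg)

lemma sum_posterior_split_mult:
  assumes "j < m"
  shows "(\<Sum>i\<le>n. posterior_weights j i * f i)
      = (\<Sum>y\<in>Y j. signal_weight j y * (\<Sum>i\<le>n. posterior_split j y i * f i))"
  unfolding posterior_weights_def
  by (simp add: sum_distrib_left sum_distrib_right sum.swap[of _ "{..n}"] algebra_simps)

lemma sum_posterior_weights: "j < m \<Longrightarrow> (\<Sum>i\<le>n. posterior_weights j i) = 2"
  using sum_posterior_split_mult[of j "\<lambda>_. 1"] posterior_split_spec sum_P
  unfolding grid_split_def signal_weight_def by (simp add: sum.distrib)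

lemma posterior_weights_mean: "j < m \<Longrightarrow> (\<Sum>i\<le>n. posterior_weights j i * threshold i) = 1"
  using sum_posterior_split_mult[of j threshold] posterior_split_spec signal_weight_posterior sum_P
  unfolding grid_split_def by simp

lemma call_fun_posterior_weights:
  assumes "j < m" "l \<le> n"
  shows "experiment_call j l =
    (\<Sum>y\<in>Y j. max 0 (P j 1 y - threshold l * signal_weight j y))"
proof -
  have "signal_weight j y * (\<Sum>i\<le>n. posterior_split j y i * max 0 (threshold i - threshold l)) =
      max 0 (P j 1 y - threshold l * signal_weight j y)" if y: "y \<in> Y j" for y
  proof -
    have "(\<Sum>i\<le>n. posterior_split j y i * max 0 (threshold i - threshold l))
        = max 0 (posterior j y - threshold l)"
      using posterior_split_spec[OF assms(1) y] assms(2) unfolding grid_split_def call_fun_def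
      by simp
    moreover have "signal_weight j y * max 0 (posterior j y - threshold l) =
        max 0 (signal_weight j y * (posterior j y - threshold l))"
      using signal_weight_nonneg[OF assms(1) y] by (simp add: max_mult_distrib_left)
    ultimately show ?thesis using signal_weight_posterior[OF assms(1) y]
      by (simp add: algebra_simps)
  qed
  then show ?thesis unfolding call_fun_def sum_posterior_split_mult[OF assms(1)] by simp
qed

definition max_call :: "nat \<Rightarrow> real" where
  "max_call l = Max ((\<lambda>j. experiment_call j l) ` {..<m})"

lemma call_fun_le_max_call: "j < m \<Longrightarrow> experiment_call j l \<le> max_call l"
  unfolding max_call_def by (rule Max_ge) auto

lemma max_call_attained: "\<exists>j<m. max_call l = experiment_call j l"
proof -
  have "max_call l \<in> (\<lambda>j. experiment_call j l) ` {..<m}"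
    unfolding max_call_def by (rule Max_in) (use m in \<open>auto simp: lessThan_empty_iff\<close>)
  then show ?thesis by auto
qed

lemma max_call_0: "max_call 0 = 1"
  using max_call_attained[of 0] call_fun_bottom posterior_weights_mean threshold_0 by fastforce

text \<open>A maximum of convex functions is convex, so the pointwise maximum of the call functions
  of the experiments is itself a call function.\<close>

lemma exists_join_weights:
  "\<exists>v. (\<forall>i\<le>n. 0 \<le> v i) \<and> (\<Sum>i\<le>n. v i) = 2 \<and>
      (\<forall>l\<le>n. call_fun threshold n v (threshold l) = max_call l)"
proof (rule exists_weights_with_call_fun[OF n])
  show "max_call n = 0" using max_call_attained[of n] call_fun_top by auto
  show "0 \<le> max_call (n-1)"
    using max_call_attained[of "n-1"] call_fun_nonneg posterior_weights_nonneg by metis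
  show "\<forall>l. 0 < l \<and> l < n \<longrightarrow> max_call l * (threshold (l + 1) - threshold (l - 1)) \<le>
      max_call (l - 1) * (threshold (l + 1) - threshold l)
        + max_call (l + 1) * (threshold l - threshold (l - 1))"
  proof (intro allI impI)
    fix l assume l: "0 < l \<and> l < n"
    obtain j where j: "j < m" "max_call l = experiment_call j l"
      using max_call_attained by blast
    have "threshold (l - 1) < threshold l" "threshold l < threshold (l+1)" using grid_less l by auto
    have "max_call l * (threshold (l + 1) - threshold (l - 1)) \<le>
        experiment_call j (l-1) * (threshold (l + 1) - threshold l) +
        experiment_call j (l+1) * (threshold l - threshold (l - 1))"
      using call_fun_grid_convex[of "posterior_weights j" l] posterior_weights_nonneg j l by simp
    also have "\<dots> \<le> max_call (l - 1) * (threshold (l + 1) - threshold l)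
            + max_call (l + 1) * (threshold l - threshold (l - 1))"
      using call_fun_le_max_call[OF j(1)] \<open>threshold (l - 1) < threshold l\<close>
              \<open>threshold l < threshold (l+1)\<close>
      by (intro add_mono mult_right_mono) auto
    finally show "max_call l * (threshold (l + 1) - threshold (l - 1)) \<le>
        max_call (l - 1) * (threshold (l + 1) - threshold l)
          + max_call (l + 1) * (threshold l - threshold (l - 1))" .
  qed
  obtain j where j: "j < m" "max_call 1 = experiment_call j 1"
    using max_call_attained by blast
  have "(\<Sum>i\<in>{1..n}. posterior_weights j i) \<le> (\<Sum>i\<le>n. posterior_weights j i)"
    using posterior_weights_nonneg[OF j(1)] by (intro sum_mono2) auto
  then have "(threshold 1 - threshold 0) * (\<Sum>i\<in>{1..n}. posterior_weights j i)
      \<le> (threshold 1 - threshold 0) * 2"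
    using sum_posterior_weights[OF j(1)] grid_less[of 0 1] n by (intro mult_left_mono) auto
  then have "experiment_call j 0 - max_call 1 \<le> (threshold 1 - threshold 0) * 2"
    using call_fun_diff[of 1 "posterior_weights j"] n j by simp
  then show "max_call 0 - max_call 1 \<le> (threshold 1 - threshold 0) * 2"
    using max_call_0 call_fun_bottom posterior_weights_mean[OF j(1)] threshold_0 by simp
qed

definition join_weights :: "nat \<Rightarrow> real" where
  "join_weights = (SOME v. (\<forall>i\<le>n. 0 \<le> v i) \<and> (\<Sum>i\<le>n. v i) = 2 \<and>
     (\<forall>l\<le>n. call_fun threshold n v (threshold l) = max_call l))"

lemma join_weights_spec:
  "\<forall>i\<le>n. 0 \<le> join_weights i" "(\<Sum>i\<le>n. join_weights i) = 2"
  "\<forall>l\<le>n. call_fun threshold n join_weights (threshold l) = max_call l"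
  using someI_ex[OF exists_join_weights] unfolding join_weights_def by auto

lemma join_weights_mean: "(\<Sum>i\<le>n. join_weights i * threshold i) = 1"
  using join_weights_spec(2) join_weights_spec(3)[rule_format, of 0] max_call_0
    call_fun_bottom[of join_weights] threshold_0 by simp

lemma posterior_weights_convex_dominated:
  "j < m \<Longrightarrow> convex_dominated (posterior_weights j) join_weights"
  unfolding convex_dominated_def
  using posterior_weights_nonneg join_weights_spec sum_posterior_weights posterior_weights_mean
    join_weights_mean call_fun_le_max_call by auto

definition join_coupling :: "nat \<Rightarrow> nat \<Rightarrow> nat \<Rightarrow> real" where
  "join_coupling j = (SOME \<gamma>. martingale_coupling (posterior_weights j) join_weights \<gamma>)"

lemma join_coupling_spec:
  "j < m \<Longrightarrow> martingale_coupling (posterior_weights j) join_weights (join_coupling j)"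
  unfolding join_coupling_def
  using martingale_coupling_if_convex_dominated[OF posterior_weights_convex_dominated]
  by (rule someI_ex)

lemma join_coupling_nonneg: "j < m \<Longrightarrow> 0 \<le> join_coupling j i i'"
  using join_coupling_spec unfolding martingale_coupling_def by blast

lemma join_coupling_row: "j < m \<Longrightarrow> i \<le> n \<Longrightarrow> (\<Sum>i'\<le>n. join_coupling j i i') = posterior_weights j i"
  using join_coupling_spec unfolding martingale_coupling_def by blast

lemma join_coupling_col: "j < m \<Longrightarrow> i' \<le> n \<Longrightarrow> (\<Sum>i\<le>n. join_coupling j i i') = join_weights i'"
  using join_coupling_spec unfolding martingale_coupling_def by blast

lemma join_coupling_belief:
  assumes "j < m" "i \<le> n"
  shows "(\<Sum>i'\<le>n. join_coupling j i i' * belief \<theta> (threshold i'))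
      = posterior_weights j i * belief \<theta> (threshold i)"
  using join_coupling_spec[OF assms(1)] join_coupling_row[OF assms] assms(2)
  unfolding sum_mult_belief martingale_coupling_def by (simp add: belief_def right_diff_distrib)

lemma join_coupling_eq_0_row:
  assumes "j < m" "i \<le> n" "i' \<le> n" "posterior_weights j i = 0"
  shows "join_coupling j i i' = 0"
  using sum_nonneg_eq_0_iff[of "{..n}" "join_coupling j i"] join_coupling_row join_coupling_nonneg
    assms by auto

lemma join_coupling_eq_0_col:
  assumes "j < m" "i \<le> n" "i' \<le> n" "join_weights i' = 0"
  shows "join_coupling j i i' = 0"
  using sum_nonneg_eq_0_iff[of "{..n}" "\<lambda>x. join_coupling j x i'"] join_coupling_col
    join_coupling_nonneg
    assms
  by auto

lemma signal_split_eq_0: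
  assumes "j < m" "y \<in> Y j" "posterior_weights j i = 0"
  shows "signal_weight j y * posterior_split j y i = 0"
  using sum_nonneg_eq_0_iff[of "Y j" "\<lambda>x. signal_weight j x * posterior_split j x i"]
    assms finite_signal_set
    signal_weight_nonneg posterior_split_spec
  unfolding posterior_weights_def grid_split_def by auto

text \<open>The conditional distribution of the signal of experiment \<open>j\<close> given the joint grid point
  \<open>i'\<close>: go back along the martingale coupling to a grid point \<open>i\<close> of experiment \<open>j\<close>, then to a
  signal whose split puts weight on \<open>i\<close>.\<close>

definition signal_kernel :: "nat \<Rightarrow> nat \<Rightarrow> 'y \<Rightarrow> real" where
  "signal_kernel j i' y = (\<Sum>i\<le>n. (join_coupling j i i' / join_weights i') *
     (signal_weight j y * posterior_split j y i / posterior_weights j i))"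

lemma signal_kernel_nonneg: "j < m \<Longrightarrow> y \<in> Y j \<Longrightarrow> i' \<le> n \<Longrightarrow> 0 \<le> signal_kernel j i' y"
  unfolding signal_kernel_def
  using join_coupling_nonneg join_weights_spec(1) signal_weight_nonneg posterior_split_spec
    posterior_weights_nonneg
  unfolding grid_split_def by (auto intro!: sum_nonneg mult_nonneg_nonneg divide_nonneg_nonneg)

lemma signal_kernel_eq_0: "join_weights i' = 0 \<Longrightarrow> signal_kernel j i' y = 0"
  unfolding signal_kernel_def by simp

lemma sum_signal_kernel:
  assumes "j < m" "i' \<le> n"
  shows "(\<Sum>y\<in>Y j. signal_kernel j i' y) = (if join_weights i' = 0 then 0 else 1)"
proof -
  have "(\<Sum>y\<in>Y j. signal_kernel j i' y) = (\<Sum>i\<le>n. (join_coupling j i i' / join_weights i') *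
      ((\<Sum>y\<in>Y j. signal_weight j y * posterior_split j y i) / posterior_weights j i))"
    unfolding signal_kernel_def
    by (simp add: sum.swap[of _ "Y j"] sum_distrib_left sum_divide_distrib)
  also have "\<dots> = (\<Sum>i\<le>n. join_coupling j i i') / join_weights i'"
    unfolding sum_divide_distrib posterior_weights_def[symmetric]
    using join_coupling_eq_0_row[OF assms(1) _ assms(2)] by (intro sum.cong) auto
  also have "\<dots> = (if join_weights i' = 0 then 0 else 1)" using join_coupling_col assms by simp
  finally show ?thesis .
qed

definition state_weight :: "nat \<Rightarrow> nat \<Rightarrow> real" where
  "state_weight \<theta> i' = join_weights i' * belief \<theta> (threshold i')"

lemma state_weight_nonneg: "i' \<le> n \<Longrightarrow> 0 \<le> state_weight \<theta> i'"
  unfolding state_weight_def belief_def using join_weights_spec(1) threshold_bounds by auto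

lemma state_weight_eq_0: "join_weights i' = 0 \<Longrightarrow> state_weight \<theta> i' = 0"
  unfolding state_weight_def by simp

lemma sum_state_weight: "\<theta> \<in> {1,2} \<Longrightarrow> (\<Sum>i'\<le>n. state_weight \<theta> i') = 1"
  unfolding state_weight_def sum_mult_belief using join_weights_spec(2) join_weights_mean by auto

lemma marginal_signal_kernel:
  assumes "j < m" "c \<in> Y j" "\<theta> \<in> {1,2}"
  shows "(\<Sum>i'\<le>n. state_weight \<theta> i' * signal_kernel j i' c) = P j \<theta> c"
proof -
  define K where "K i = signal_weight j c * posterior_split j c i / posterior_weights j i" for i
  have "join_weights i' * belief \<theta> (threshold i') * (join_coupling j i i' / join_weights i' * K i) =
      K i * (join_coupling j i i' * belief \<theta> (threshold i'))" if "i \<le> n" "i' \<le> n" for i i'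
    using join_coupling_eq_0_col[OF assms(1) that] by (cases "join_weights i' = 0") auto
  then have "(\<Sum>i'\<le>n. state_weight \<theta> i' * signal_kernel j i' c) =
      (\<Sum>i\<le>n. K i * (\<Sum>i'\<le>n. join_coupling j i i' * belief \<theta> (threshold i')))"
    unfolding state_weight_def signal_kernel_def K_def[symmetric] sum_distrib_left
    by (subst sum.swap) (intro sum.cong refl, auto)
  also have "\<dots> = (\<Sum>i\<le>n. posterior_weights j i * K i * belief \<theta> (threshold i))"
    using join_coupling_belief[OF assms(1)] by (intro sum.cong) auto
  also have "\<dots> = signal_weight j c * (\<Sum>i\<le>n. posterior_split j c i * belief \<theta> (threshold i))"
    using signal_split_eq_0[OF assms(1,2)] unfolding sum_distrib_left K_def
    by (intro sum.cong refl) (cases "posterior_weights j i = 0"; auto)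
  also have "\<dots> = signal_weight j c * belief \<theta> (posterior j c)"
    using posterior_split_spec[OF assms(1,2)] unfolding sum_mult_belief grid_split_def
    by (simp add: belief_def)
  also have "\<dots> = P j \<theta> c" using signal_weight_belief[OF assms] .
  finally show ?thesis .
qed

text \<open>Draw a joint grid point \<open>i'\<close> together with the state, then the signals of all experiments
  independently through their kernels.\<close>

definition worst_coupling :: "nat \<Rightarrow> (nat \<Rightarrow> 'y) \<Rightarrow> real" where
  "worst_coupling \<theta> y = (\<Sum>i'\<le>n. state_weight \<theta> i' * (\<Prod>j<m. signal_kernel j i' (y j)))"

lemma sum_prod_signal_kernel:
  assumes "i' \<le> n"
  shows "(\<Sum>y\<in>profiles m Y. \<Prod>j<m. signal_kernel j i' (y j)) = (if join_weights i' = 0 then 0 else 1)"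
proof -
  have "(\<Sum>y\<in>profiles m Y. \<Prod>j<m. signal_kernel j i' (y j)) = (\<Prod>j<m. sum (signal_kernel j i') (Y j))"
    unfolding profiles_def using finite_signal_set by (intro prod_sum_PiE[symmetric]) auto
  also have "\<dots> = (if join_weights i' = 0 then 0 else 1) ^ m"
    using sum_signal_kernel assms by simp
  finally show ?thesis using m by simp
qed

lemma sum_prod_signal_kernel_fixed:
  assumes "i' \<le> n" "j < m" "c \<in> Y j"
  shows "(\<Sum>y\<in>{y \<in> profiles m Y. y j = c}. \<Prod>j<m. signal_kernel j i' (y j)) = signal_kernel j i' c"
proof -
  have "(\<Sum>y\<in>{y \<in> profiles m Y. y j = c}. \<Prod>j<m. signal_kernel j i' (y j)) =
      signal_kernel j i' c * (\<Prod>i\<in>{..<m}-{j}. sum (signal_kernel i i') (Y i))"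
    unfolding profiles_def using finite_signal_set assms(2,3) by (intro sum_PiE_fixed_prod) auto
  then show ?thesis using sum_signal_kernel assms(1) signal_kernel_eq_0
    by (cases "join_weights i' = 0") auto
qed

lemma worst_coupling_is_dist:
  assumes "\<theta> \<in> {1,2}"
  shows "is_dist (profiles m Y) (worst_coupling \<theta>)"
  unfolding is_dist_def
proof
  show "\<forall>y\<in>profiles m Y. 0 \<le> worst_coupling \<theta> y"
    unfolding worst_coupling_def profiles_def using state_weight_nonneg signal_kernel_nonneg
    by (auto intro!: sum_nonneg mult_nonneg_nonneg prod_nonneg simp: PiE_iff)
  have "sum (worst_coupling \<theta>) (profiles m Y) =
      (\<Sum>i'\<le>n. state_weight \<theta> i' * (\<Sum>y\<in>profiles m Y. \<Prod>j<m. signal_kernel j i' (y j)))"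
    unfolding worst_coupling_def by (simp add: sum.swap[of _ "profiles m Y"] sum_distrib_left)
  also have "\<dots> = (\<Sum>i'\<le>n. state_weight \<theta> i')"
    using sum_prod_signal_kernel state_weight_eq_0 by (intro sum.cong) auto
  also have "\<dots> = 1" using sum_state_weight assms by simp
  finally show "sum (worst_coupling \<theta>) (profiles m Y) = 1" .
qed

lemma worst_coupling_marginal:
  assumes "\<theta> \<in> {1,2}" "j < m" "c \<in> Y j"
  shows "(\<Sum>y\<in>{y \<in> profiles m Y. y j = c}. worst_coupling \<theta> y) = P j \<theta> c"
proof -
  have "(\<Sum>y\<in>{y \<in> profiles m Y. y j = c}. worst_coupling \<theta> y) =
      (\<Sum>i'\<le>n. state_weight \<theta> i' * (\<Sum>y\<in>{y \<in> profiles m Y. y j = c}. \<Prod>j<m. signal_kernel j i' (y j)))"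
    unfolding worst_coupling_def
    by (simp add: sum.swap[of _ "{y \<in> profiles m Y. y j = c}"] sum_distrib_left)
  also have "\<dots> = (\<Sum>i'\<le>n. state_weight \<theta> i' * signal_kernel j i' c)"
    using sum_prod_signal_kernel_fixed assms by simp
  also have "\<dots> = P j \<theta> c" using marginal_signal_kernel assms by simp
  finally show ?thesis .
qed

lemma worst_coupling_in_couplings: "worst_coupling \<in> couplings {1,2} m Y P"
  unfolding couplings_def using worst_coupling_is_dist worst_coupling_marginal by blast

end

section \<open>The upper bound\<close>

context two_state_problem
begin

lemma max0_increment_combination:
  assumes "1 \<le> l" "l < n"
  shows "max 0 (a * inc1 l + b * inc2 l) = (inc1 l - inc2 l) * max 0 (a - threshold l * (a + b))"
proof -
  have "a * inc1 l + b * inc2 l = (inc1 l - inc2 l) * a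
        - (threshold l * (inc1 l - inc2 l)) * (a + b)"
    unfolding threshold_mult[OF assms] by (simp add: algebra_simps)
  also have "\<dots> = (inc1 l - inc2 l) * (a - threshold l * (a + b))" by (simp add: algebra_simps)
  finally show ?thesis using inc1_pos[OF assms] inc2_neg[OF assms]
    by (simp add: max_mult_distrib_left)
qed

lemma u_telescope: "a \<in> {1..n} \<Longrightarrow> \<theta> \<in> {1,2} \<Longrightarrow> u \<theta> a = (\<Sum>l\<in>{1..<a}. u \<theta> (Suc l) - u \<theta> l)"
  using sum_Suc_diff'[of 1 a "u \<theta>"] norm by auto

text \<open>Bounds the payoff against the state weights of \<open>i'\<close>: the payoff of every action is a partial
  sum of the increments.\<close>

definition best_value :: "nat \<Rightarrow> real" where
  "best_value i' = (\<Sum>l\<in>{1..<n}. max 0 (state_weight 1 i' * inc1 l + state_weight 2 i' * inc2 l))"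

lemma payoff_vector_le_best_value:
  assumes "a \<in> {1..n}"
  shows "state_weight 1 i' * u 1 a + state_weight 2 i' * u 2 a \<le> best_value i'"
proof -
  have "state_weight 1 i' * u 1 a + state_weight 2 i' * u 2 a =
      (\<Sum>l\<in>{1..<a}. state_weight 1 i' * inc1 l + state_weight 2 i' * inc2 l)"
    using u_telescope[OF assms] unfolding inc1_def inc2_def
    by (simp add: sum_distrib_left sum.distrib)
  also have "\<dots> \<le> (\<Sum>l\<in>{1..<a}. max 0 (state_weight 1 i' * inc1 l + state_weight 2 i' * inc2 l))"
    by (intro sum_mono) auto
  also have "\<dots> \<le> best_value i'" unfolding best_value_def using assms by (intro sum_mono2) auto
  finally show ?thesis .
qed

lemma eu_le_best_value:
  assumes "is_dist {1..n} \<alpha>"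
  shows "state_weight 1 i' * eu {1..n} u 1 \<alpha> + state_weight 2 i' * eu {1..n} u 2 \<alpha> \<le> best_value i'"
proof -
  have "state_weight 1 i' * eu {1..n} u 1 \<alpha> + state_weight 2 i' * eu {1..n} u 2 \<alpha> =
      (\<Sum>a\<in>{1..n}. \<alpha> a * (state_weight 1 i' * u 1 a + state_weight 2 i' * u 2 a))"
    unfolding eu_def by (simp add: sum_distrib_left sum.distrib algebra_simps)
  also have "\<dots> \<le> (\<Sum>a\<in>{1..n}. \<alpha> a * best_value i')"
    using assms payoff_vector_le_best_value unfolding is_dist_def
    by (intro sum_mono mult_left_mono) auto
  also have "\<dots> = best_value i'" using assms unfolding is_dist_def by (simp flip: sum_distrib_right)
  finally show ?thesis .
qed

lemma payoff_worst_coupling_le: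
  assumes \<sigma>: "\<sigma> \<in> strategies {1..n} (profiles m Y)"
  shows "payoff {1,2} {1..n} u (profiles m Y) worst_coupling \<sigma> \<le> (\<Sum>i'\<le>n. best_value i')"
proof -
  define Pr where "Pr y i' = (\<Prod>j<m. signal_kernel j i' (y j))" for y i'
  have Pr_nonneg: "0 \<le> Pr y i'" if "y \<in> profiles m Y" "i' \<le> n" for y i'
    unfolding Pr_def using signal_kernel_nonneg that unfolding profiles_def
    by (auto intro!: prod_nonneg simp: PiE_iff)
  have "state_weight 1 i' * eu {1..n} u 1 (\<sigma> y) + state_weight 2 i' * eu {1..n} u 2 (\<sigma> y)
      \<le> best_value i'" if "y \<in> profiles m Y" for y i'
    using \<sigma> that unfolding strategies_def by (intro eu_le_best_value) auto
  then have "worst_coupling 1 y * eu {1..n} u 1 (\<sigma> y) + worst_coupling 2 y * eu {1..n} u 2 (\<sigma> y) \<le>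
      (\<Sum>i'\<le>n. Pr y i' * best_value i')" if y: "y \<in> profiles m Y" for y
    unfolding worst_coupling_def Pr_def[symmetric] sum_distrib_right
    using Pr_nonneg[OF y] by (simp add: sum.distrib[symmetric] algebra_simps flip: distrib_left)
      (intro sum_mono mult_left_mono, auto simp: y)
  then have "payoff {1,2} {1..n} u (profiles m Y) worst_coupling \<sigma>
        \<le> (\<Sum>y\<in>profiles m Y. \<Sum>i'\<le>n. Pr y i' * best_value i')"
    unfolding payoff_def by (simp add: sum.distrib[symmetric] sum_mono)
  also have "\<dots> = (\<Sum>i'\<le>n. best_value i' * (\<Sum>y\<in>profiles m Y. Pr y i'))"
    by (subst sum.swap) (simp add: sum_distrib_left mult.commute)
  also have "\<dots> \<le> (\<Sum>i'\<le>n. best_value i')"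
    using sum_prod_signal_kernel unfolding Pr_def best_value_def
    by (intro sum_mono) (auto intro: sum_nonneg)
  finally show ?thesis .
qed

lemma sum_best_value: "(\<Sum>i'\<le>n. best_value i') = (\<Sum>l\<in>{1..<n}. (inc1 l - inc2 l) * max_call l)"
proof -
  have "(\<Sum>i'\<le>n. max 0 (state_weight 1 i' * inc1 l + state_weight 2 i' * inc2 l))
        = (inc1 l - inc2 l) * max_call l"
    if l: "l \<in> {1..<n}" for l
  proof -
    have "max 0 (state_weight 1 i' * inc1 l + state_weight 2 i' * inc2 l) =
        (inc1 l - inc2 l) * (join_weights i' * max 0 (threshold i' - threshold l))"
        if "i' \<le> n" for i'
    proof -
      have "state_weight 1 i' - threshold l * (state_weight 1 i' + state_weight 2 i') =
          join_weights i' * (threshold i' - threshold l)"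
        unfolding state_weight_def belief_def by (simp add: algebra_simps)
      then show ?thesis
        using max0_increment_combination[of l "state_weight 1 i'" "state_weight 2 i'"] l
          join_weights_spec(1) that by (simp add: max_mult_distrib_left)
    qed
    then have "(\<Sum>i'\<le>n. max 0 (state_weight 1 i' * inc1 l + state_weight 2 i' * inc2 l)) =
        (inc1 l - inc2 l) * (\<Sum>i'\<le>n. join_weights i' * max 0 (threshold i' - threshold l))"
      unfolding sum_distrib_left by simp
    also have "\<dots> = (inc1 l - inc2 l) * max_call l"
      using join_weights_spec(3) l unfolding call_fun_def by simp
    finally show ?thesis .
  qed
  then show ?thesis unfolding best_value_def by (subst sum.swap) simp
qed

lemma sum_max0_le_V1:
  assumes "j < m"
  shows "(\<Sum>y\<in>Y j. max 0 (P j 1 y * inc1 l + P j 2 y * inc2 l))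
      \<le> V1 {1,2} {0,1} (ustar u l) (Y j) (P j)"
proof -
  define act where "act y = (if 0 < P j 1 y * inc1 l + P j 2 y * inc2 l
        then 1 else 0 :: real)" for y
  define \<tau> where "\<tau> y a = (if a = 1 then act y else 1 - act y)" for y and a :: nat
  have "(\<Sum>\<theta>\<in>{1,2}. \<Sum>y\<in>Y j. P j \<theta> y * eu {0,1} (ustar u l) \<theta> (\<tau> y)) =
      (\<Sum>y\<in>Y j. act y * (P j 1 y * inc1 l + P j 2 y * inc2 l))"
    unfolding eu_ustar \<tau>_def inc1_def inc2_def by (simp add: sum.distrib[symmetric] algebra_simps)
  also have "\<dots> = (\<Sum>y\<in>Y j. max 0 (P j 1 y * inc1 l + P j 2 y * inc2 l))"
    unfolding act_def by (intro sum.cong) auto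
  finally have "(\<Sum>y\<in>Y j. max 0 (P j 1 y * inc1 l + P j 2 y * inc2 l)) =
      (\<Sum>\<theta>\<in>{1,2}. \<Sum>y\<in>Y j. P j \<theta> y * eu {0,1} (ustar u l) \<theta> (\<tau> y))" ..
  also have "\<dots> \<le> V1 {1,2} {0,1} (ustar u l) (Y j) (P j)"
    using exps assms unfolding is_experiment_def
    by (intro payoff_le_V1) (auto simp: is_dist_def \<tau>_def act_def)
  finally show ?thesis .
qed

definition best_single_value :: "nat \<Rightarrow> real" where
  "best_single_value l = Max ((\<lambda>j. V1 {1,2} {0,1} (ustar u l) (Y j) (P j)) ` {..<m})"

lemma max_call_le_best_single_value:
  assumes l: "l \<in> {1..<n}"
  shows "(inc1 l - inc2 l) * max_call l \<le> best_single_value l"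
proof -
  obtain j where j: "j < m" "max_call l = experiment_call j l"
    using max_call_attained by blast
  have "(inc1 l - inc2 l) * max_call l
        = (\<Sum>y\<in>Y j. (inc1 l - inc2 l) * max 0 (P j 1 y - threshold l * signal_weight j y))"
    using j call_fun_posterior_weights[OF j(1)] l by (simp add: sum_distrib_left)
  also have "\<dots> = (\<Sum>y\<in>Y j. max 0 (P j 1 y * inc1 l + P j 2 y * inc2 l))"
    using max0_increment_combination l unfolding signal_weight_def by simp
  also have "\<dots> \<le> V1 {1,2} {0,1} (ustar u l) (Y j) (P j)" using sum_max0_le_V1[OF j(1)] .
  also have "\<dots> \<le> best_single_value l" unfolding best_single_value_def using j(1)
    by (intro Max_ge) auto
  finally show ?thesis .
qed

lemma Vrob_le_sum_best_single_value: "Vrob {1,2} {1..n} u m Y P \<le> (\<Sum>l\<in>{1..<n}. best_single_value l)"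
proof (rule Vrob_least)
  have "(\<lambda>y a. if a = 1 then 1 else 0) \<in> strategies {1..n} (profiles m Y)"
    unfolding strategies_def is_dist_def using n by auto
  then show "strategies {1..n} (profiles m Y) \<noteq> {}" by auto
  fix \<sigma> assume \<sigma>: "\<sigma> \<in> strategies {1..n} (profiles m Y)"
  have "guarantee {1,2} {1..n} u m Y P \<sigma> \<le> payoff {1,2} {1..n} u (profiles m Y) worst_coupling \<sigma>"
    by (rule guarantee_le_payoff[OF worst_coupling_in_couplings \<sigma>]) auto
  also have "\<dots> \<le> (\<Sum>i'\<le>n. best_value i')" by (rule payoff_worst_coupling_le[OF \<sigma>])
  also have "\<dots> \<le> (\<Sum>l\<in>{1..<n}. best_single_value l)"
    unfolding sum_best_value by (intro sum_mono max_call_le_best_single_value)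
  finally show "guarantee {1,2} {1..n} u m Y P \<sigma> \<le> (\<Sum>l\<in>{1..<n}. best_single_value l)" .
qed

end

section \<open>A mixed action dominating a sum of binary decisions\<close>

lemma summation_by_parts:
  fixes f U :: "nat \<Rightarrow> real"
  assumes "1 \<le> N"
  shows "(\<Sum>a\<in>{1..N}. (f (a-1) - f a) * U a)
      = (\<Sum>l\<in>{1..<N}. f l * (U (Suc l) - U l)) + f 0 * U 1 - f N * U N"
  using assms
proof (induction N rule: nat_induct_at_least)
  case (Suc N)
  then show ?case by (simp add: algebra_simps)
qed (simp add: algebra_simps)

lemma decreasing_weights_mixture:
  fixes q :: "nat \<Rightarrow> real"
  assumes "1 \<le> N" "q 0 = 1" "q N = 0" "\<And>l. q (Suc l) \<le> q l"
  shows "is_dist {1..N} (\<lambda>a. q (a-1) - q a)"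
    and "eu {1..N} u \<theta> (\<lambda>a. q (a-1) - q a) = (\<Sum>l\<in>{1..<N}. q l * (u \<theta> (Suc l) - u \<theta> l)) + u \<theta> 1"
proof -
  have "(\<Sum>a\<in>{1..N}. q (a-1) - q a) = (\<Sum>i=0..N-1. q i - q (Suc i))"
    using assms(1) sum.shift_bounds_cl_Suc_ivl[of "\<lambda>a. q (a-1) - q a" 0 "N-1"] by simp
  also have "\<dots> = - (\<Sum>i=0..N-1. q (Suc i) - q i)" by (simp add: sum_negf[symmetric])
  also have "\<dots> = q 0 - q N" using sum_Suc_diff[of 0 "N-1" q] assms(1) by simp
  moreover have "q a \<le> q (a-1)" if "a \<in> {1..N}" for a
    using assms(4)[of "a-1"] that by simp
  ultimately show "is_dist {1..N} (\<lambda>a. q (a-1) - q a)"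
    unfolding is_dist_def using assms by auto
  show "eu {1..N} u \<theta> (\<lambda>a. q (a-1) - q a) = (\<Sum>l\<in>{1..<N}. q l * (u \<theta> (Suc l) - u \<theta> l)) + u \<theta> 1"
    unfolding eu_def using summation_by_parts[OF assms(1), of q "u \<theta>"] assms(2,3) by simp
qed

lemma sum_min_telescope:
  fixes d Pre :: "nat \<Rightarrow> real" and X :: real
  assumes "0 \<le> X" "Pre 1 = 0" "\<And>l. 1 \<le> l \<Longrightarrow> Pre (Suc l) = Pre l + d l" "\<And>l. 0 < d l" "1 \<le> L"
  shows "(\<Sum>l\<in>{1..<L}. min (d l) (max 0 (X - Pre l))) = min X (Pre L)"
  using assms(5)
proof (induction L rule: nat_induct_at_least)
  case (Suc L)
  have "(\<Sum>l\<in>{1..<Suc L}. min (d l) (max 0 (X - Pre l)))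
        = min X (Pre L) + min (d L) (max 0 (X - Pre L))"
    using Suc by simp
  also have "\<dots> = min X (Pre (Suc L))" using assms(3)[OF Suc(1)] assms(4)[of L]
    by (simp add: min_def max_def)
  finally show ?case .
qed (use assms in simp)

text \<open>Fill the buckets \<open>d 1, d 2, \<dots>\<close> in order with the amount \<open>X\<close>: all but one are full or empty.\<close>

lemma greedy_fill:
  fixes d :: "nat \<Rightarrow> real"
  assumes d: "\<And>l. 0 < d l" and X: "0 \<le> X" "X \<le> (\<Sum>l\<in>{1..<N}. d l)" and N: "1 \<le> N"
  shows "\<exists>q. (\<forall>l. 0 \<le> q l \<and> q l \<le> 1) \<and> (\<Sum>l\<in>{1..<N}. q l * d l) = X \<and>
    (\<forall>l l'. 1 \<le> l \<longrightarrow> l < l' \<longrightarrow> q l < 1 \<longrightarrow> q l' = 0)"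
proof -
  define Pre where "Pre L = (\<Sum>l\<in>{1..<L}. d l)" for L
  have PreS: "Pre (Suc l) = Pre l + d l" if "1 \<le> l" for l
    unfolding Pre_def using that by (simp add: atLeastLessThanSuc)
  have Pre_mono: "Pre a \<le> Pre b" if "a \<le> b" for a b
    unfolding Pre_def using d that by (intro sum_mono2) (auto intro: less_imp_le)
  define q where "q l = min 1 (max 0 ((X - Pre l) / d l))" for l
  have "q l * d l = min (d l) (max 0 (X - Pre l))" for l
    unfolding q_def using d[of l] by (simp add: min_mult_distrib_right max_mult_distrib_right)
  moreover have "Pre 1 = 0" unfolding Pre_def by simp
  ultimately have "(\<Sum>l\<in>{1..<N}. q l * d l) = min X (Pre N)"
    using sum_min_telescope[of X Pre d N] X(1) PreS d N by simp
  also have "\<dots> = X" using X(2) unfolding Pre_def by simp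
  finally have sum_q: "(\<Sum>l\<in>{1..<N}. q l * d l) = X" .
  have "q l' = 0" if "1 \<le> l" "l < l'" "q l < 1" for l l'
  proof -
    have "(X - Pre l) / d l < 1" using that(3) unfolding q_def
      by (auto simp: min_def max_def split: if_splits)
    then have "X < Pre (Suc l)" using d[of l] PreS[OF that(1)] by (simp add: divide_less_eq)
    also have "\<dots> \<le> Pre l'" using that Pre_mono by simp
    finally show ?thesis using d[of l'] unfolding q_def by (simp add: divide_neg_pos)
  qed
  moreover have "\<forall>l. 0 \<le> q l \<and> q l \<le> 1" unfolding q_def by auto
  ultimately show ?thesis using sum_q by blast
qed

text \<open>A rearrangement inequality: moving mass to the front of an increasing sequence \<open>t\<close> does not
  increase the weighted sum.\<close>

lemma sum_increasing_times_deviation_nonpos: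
  fixes t q p d :: "nat \<Rightarrow> real"
  assumes t: "\<And>l l'. l \<in> {1..<N} \<Longrightarrow> l' \<in> {1..<N} \<Longrightarrow> l \<le> l' \<Longrightarrow> t l \<le> t l'"
    and q: "\<forall>l. 0 \<le> q l \<and> q l \<le> 1" "\<forall>l l'. 1 \<le> l \<longrightarrow> l < l' \<longrightarrow> q l < 1 \<longrightarrow> q l' = 0"
    and p: "\<forall>l\<in>{1..<N}. 0 \<le> p l \<and> p l \<le> 1" and d: "\<forall>l\<in>{1..<N}. 0 \<le> d l"
    and balance: "(\<Sum>l\<in>{1..<N}. (q l - p l) * d l) = 0"
  shows "(\<Sum>l\<in>{1..<N}. t l * ((q l - p l) * d l)) \<le> 0"
proof (cases "N \<le> 1")
  case False
  obtain s where s: "s \<in> {1..<N}" and before: "\<forall>l\<in>{1..<N}. l < s \<longrightarrow> q l = 1"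
    and after: "\<forall>l\<in>{1..<N}. s < l \<longrightarrow> q l = 0"
  proof (cases "\<exists>l\<in>{1..<N}. q l < 1")
    case True
    define s where "s = (LEAST l. l \<in> {1..<N} \<and> q l < 1)"
    have "s \<in> {1..<N}" "q s < 1" unfolding s_def using True by (metis (mono_tags, lifting) LeastI)+
    moreover have "\<forall>l\<in>{1..<N}. l < s \<longrightarrow> q l = 1"
      using not_less_Least[of _ "\<lambda>l. l \<in> {1..<N} \<and> q l < 1"] q(1) unfolding s_def
      by (metis linorder_not_less order_antisym)
    ultimately show ?thesis using that q(2) by auto
  next
    case False
    then have "\<forall>l\<in>{1..<N}. q l = 1" using q(1) by (meson not_less order_antisym)
    moreover have "N - 1 \<in> {1..<N}" using \<open>\<not> N \<le> 1\<close> by auto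
    ultimately show ?thesis by (intro that[of "N-1"]) auto
  qed
  have "(t l - t s) * ((q l - p l) * d l) \<le> 0" if l: "l \<in> {1..<N}" for l
  proof (cases l s rule: linorder_cases)
    case less
    then have "0 \<le> (q l - p l) * d l" "t l \<le> t s" using before p d l t[OF l s] by auto
    then show ?thesis by (simp add: mult_nonpos_nonneg)
  next
    case greater
    then have "(q l - p l) * d l \<le> 0" "t s \<le> t l" using after p d l t[OF s l]
      by (auto simp: mult_nonpos_nonneg)
    then show ?thesis by (simp add: mult_nonneg_nonpos)
  qed simp
  then have "(\<Sum>l\<in>{1..<N}. (t l - t s) * ((q l - p l) * d l)) \<le> 0" by (rule sum_nonpos)
  moreover have "(\<Sum>l\<in>{1..<N}. t l * ((q l - p l) * d l)) =
      (\<Sum>l\<in>{1..<N}. (t l - t s) * ((q l - p l) * d l)) + t s * (\<Sum>l\<in>{1..<N}. (q l - p l) * d l)"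
    by (simp add: algebra_simps sum.distrib sum_distrib_left sum_subtractf)
  ultimately show ?thesis using balance by simp
qed simp

context two_state_problem
begin

definition threshold_odds :: "nat \<Rightarrow> real" where
  "threshold_odds l = threshold l / (1 - threshold l)"

lemma inc2_eq_odds:
  assumes "1 \<le> l" "l < n"
  shows "inc2 l = - threshold_odds l * inc1 l"
proof -
  have "threshold l < 1" using grid_less[of l n] threshold_n assms by simp
  then show ?thesis
    using threshold_mult[OF assms] unfolding threshold_odds_def by (simp add: field_simps)
qed

lemma threshold_odds_mono:
  assumes "l \<le> l'" "l' < n"
  shows "threshold_odds l \<le> threshold_odds l'"
proof -
  have "threshold l \<le> threshold l'" "threshold l' < 1"
    using grid_le grid_less[of l' n] threshold_n assms by auto
  then show ?thesis unfolding threshold_odds_def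
    by (simp add: divide_simps) (simp add: algebra_simps)
qed

lemma exists_mixture_of_step_weights:
  assumes q: "\<forall>l. 0 \<le> q l \<and> q l \<le> 1" "\<forall>l l'. 1 \<le> l \<longrightarrow> l < l' \<longrightarrow> q l < 1 \<longrightarrow> q l' = 0"
  shows "\<exists>\<alpha>. is_dist {1..n} \<alpha> \<and>
    (\<forall>\<theta>\<in>{1,2}. eu {1..n} u \<theta> \<alpha> = (\<Sum>l\<in>{1..<n}. q l * (u \<theta> (Suc l) - u \<theta> l)))"
proof -
  define q' where "q' l = (if l = 0 then 1 else if l < n then q l else 0)" for l
  have "q' (Suc l) \<le> q' l" for l
    using q(1)[rule_format, of l] q(1)[rule_format, of "Suc l"] q(2)[rule_format, of l "Suc l"]
    unfolding q'_def by (cases "q l < 1") auto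
  then have mix: "is_dist {1..n} (\<lambda>a. q' (a-1) - q' a)"
      "\<And>\<theta>. eu {1..n} u \<theta> (\<lambda>a. q' (a-1) - q' a) =
        (\<Sum>l\<in>{1..<n}. q' l * (u \<theta> (Suc l) - u \<theta> l)) + u \<theta> 1"
    using decreasing_weights_mixture[OF n, of q'] n unfolding q'_def by auto
  have "(\<Sum>l\<in>{1..<n}. q' l * (u \<theta> (Suc l) - u \<theta> l)) = (\<Sum>l\<in>{1..<n}. q l * (u \<theta> (Suc l) - u \<theta> l))"
    for \<theta> unfolding q'_def by (intro sum.cong) auto
  then show ?thesis using mix norm by (intro exI[of _ "\<lambda>a. q' (a-1) - q' a"]) auto
qed

lemma exists_dominating_mixture:
  assumes p: "\<forall>l\<in>{1..<n}. 0 \<le> p l \<and> p l \<le> 1"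
  shows "\<exists>\<alpha>. is_dist {1..n} \<alpha> \<and>
    (\<forall>\<theta>\<in>{1,2}. (\<Sum>l\<in>{1..<n}. p l * (u \<theta> (Suc l) - u \<theta> l)) \<le> eu {1..n} u \<theta> \<alpha>)"
proof -
  define d where "d l = (if 1 \<le> l \<and> l < n then inc1 l else 1)" for l
  have d_pos: "0 < d l" for l unfolding d_def using inc1_pos by auto
  have d_inc1: "(\<Sum>l\<in>{1..<n}. f l * d l) = (\<Sum>l\<in>{1..<n}. f l * inc1 l)" for f
    unfolding d_def by simp
  define X where "X = (\<Sum>l\<in>{1..<n}. p l * inc1 l)"
  have "0 \<le> X" unfolding X_def using p inc1_pos by (intro sum_nonneg) (simp add: less_imp_le)
  moreover have "X \<le> (\<Sum>l\<in>{1..<n}. d l)"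
    unfolding X_def using d_inc1[of "\<lambda>_. 1"] p inc1_pos
    by (simp, intro sum_mono) (simp add: mult_left_le_one_le)
  ultimately obtain q where q: "\<forall>l. 0 \<le> q l \<and> q l \<le> 1" "(\<Sum>l\<in>{1..<n}. q l * d l) = X"
      "\<forall>l l'. 1 \<le> l \<longrightarrow> l < l' \<longrightarrow> q l < 1 \<longrightarrow> q l' = 0"
    using greedy_fill[of d X n] d_pos n by blast
  have q_X: "(\<Sum>l\<in>{1..<n}. q l * inc1 l) = X" using q(2) d_inc1 by simp
  obtain \<alpha> where \<alpha>: "is_dist {1..n} \<alpha>"
    "\<And>\<theta>. \<theta> \<in> {1,2} \<Longrightarrow> eu {1..n} u \<theta> \<alpha> = (\<Sum>l\<in>{1..<n}. q l * (u \<theta> (Suc l) - u \<theta> l))"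
    using exists_mixture_of_step_weights[OF q(1,3)] by blast
  have "(\<Sum>l\<in>{1..<n}. threshold_odds l * ((q l - p l) * inc1 l)) \<le> 0"
    using threshold_odds_mono q(1,3) p inc1_pos q_X unfolding X_def
    by (intro sum_increasing_times_deviation_nonpos)
       (auto simp: left_diff_distrib sum_subtractf less_imp_le)
  moreover have "p l * (u 2 (Suc l) - u 2 l) =
      q l * (u 2 (Suc l) - u 2 l) + threshold_odds l * ((q l - p l) * inc1 l)"
    if "l \<in> {1..<n}" for l
  proof -
    have D: "u 2 (Suc l) - u 2 l = - threshold_odds l * inc1 l"
      using inc2_eq_odds[of l] that unfolding inc2_def by simp
    show ?thesis unfolding D by (simp add: algebra_simps)
  qed
  then have "(\<Sum>l\<in>{1..<n}. p l * (u 2 (Suc l) - u 2 l)) = (\<Sum>l\<in>{1..<n}. q l * (u 2 (Suc l) - u 2 l))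
      + (\<Sum>l\<in>{1..<n}. threshold_odds l * ((q l - p l) * inc1 l))"
    unfolding sum.distrib[symmetric] by (intro sum.cong) auto
  ultimately have "(\<Sum>l\<in>{1..<n}. p l * (u 2 (Suc l) - u 2 l)) \<le> eu {1..n} u 2 \<alpha>"
    using \<alpha>(2)[of 2] by simp
  moreover have "(\<Sum>l\<in>{1..<n}. p l * (u 1 (Suc l) - u 1 l)) = eu {1..n} u 1 \<alpha>"
    using \<alpha>(2)[of 1] q_X unfolding X_def inc1_def by simp
  ultimately show ?thesis using \<alpha>(1) by auto
qed

end

section \<open>The lower bound\<close>

lemma is_dist_01_bounds:
  fixes \<alpha> :: "nat \<Rightarrow> real"
  assumes "is_dist {0,1} \<alpha>"
  shows "0 \<le> \<alpha> 1 \<and> \<alpha> 1 \<le> 1"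
  using assms unfolding is_dist_def by auto

context two_state_problem
begin

definition dominates_decomposition ::
    "((nat \<Rightarrow> 'y) \<Rightarrow> nat \<Rightarrow> real) \<Rightarrow> (nat \<Rightarrow> (nat \<Rightarrow> 'y) \<Rightarrow> nat \<Rightarrow> real) \<Rightarrow> bool" where
  "dominates_decomposition \<sigma> \<sigma>s \<longleftrightarrow> (\<forall>y\<in>profiles m Y. \<forall>\<theta>\<in>{1,2}.
     eu {1..n} u \<theta> (\<sigma> y) \<ge> (\<Sum>l\<in>{1..<n}. eu {0,1} (ustar u l) \<theta> (\<sigma>s l y)))"

lemma exists_dominating_strategy:
  assumes "\<forall>l\<in>{1..<n}. \<sigma>s l \<in> strategies {0,1} (profiles m Y)"
  shows "\<exists>\<sigma>\<in>strategies {1..n} (profiles m Y). dominates_decomposition \<sigma> \<sigma>s"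
proof -
  define R where "R y \<alpha> \<longleftrightarrow> is_dist {1..n} \<alpha> \<and>
    (\<forall>\<theta>\<in>{1,2}. (\<Sum>l\<in>{1..<n}. \<sigma>s l y 1 * (u \<theta> (Suc l) - u \<theta> l)) \<le> eu {1..n} u \<theta> \<alpha>)" for y \<alpha>
  have "\<exists>\<alpha>. R y \<alpha>" if "y \<in> profiles m Y" for y
    unfolding R_def using assms that is_dist_01_bounds unfolding strategies_def
    by (intro exists_dominating_mixture) blast
  then obtain \<sigma> where "\<forall>y\<in>profiles m Y. R y (\<sigma> y)" using bchoice[of "profiles m Y" R] by blast
  then show ?thesis
    unfolding R_def strategies_def dominates_decomposition_def eu_ustar by (intro bexI[of _ \<sigma>]) auto
qed

lemma best_single_value_le_Vrob:
  assumes "l \<in> {1..<n}"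
  shows "best_single_value l \<le> Vrob {1,2} {0,1} (ustar u l) m Y P"
proof -
  have "best_single_value l \<in> (\<lambda>j. V1 {1,2} {0,1} (ustar u l) (Y j) (P j)) ` {..<m}"
    unfolding best_single_value_def using m by (intro Max_in) (auto simp: lessThan_empty_iff)
  then obtain j where "j < m" "best_single_value l = V1 {1,2} {0,1} (ustar u l) (Y j) (P j)" by auto
  moreover have "V1 {1,2} {0,1} (ustar u l) (Y j) (P j) \<le> Vrob {1,2} {0,1} (ustar u l) m Y P"
    by (rule V1_le_Vrob) (use \<open>j < m\<close> worst_coupling_in_couplings finite_signal_set in auto)
  ultimately show ?thesis by simp
qed

lemma sum_best_single_value_le_guarantee:
  assumes ropt: "\<forall>l\<in>{1..<n}. robustly_optimal {1,2} {0,1} (ustar u l) m Y P (\<sigma>s l)"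
    and \<sigma>: "\<sigma> \<in> strategies {1..n} (profiles m Y)" and dom: "dominates_decomposition \<sigma> \<sigma>s"
  shows "(\<Sum>l\<in>{1..<n}. best_single_value l) \<le> guarantee {1,2} {1..n} u m Y P \<sigma>"
proof (rule guarantee_greatest)
  show "couplings {1,2} m Y P \<noteq> {}" using worst_coupling_in_couplings by blast
  fix Q assume Q: "Q \<in> couplings {1,2} m Y P"
  have "(\<Sum>l\<in>{1..<n}. best_single_value l) \<le> (\<Sum>l\<in>{1..<n}. Vrob {1,2} {0,1} (ustar u l) m Y P)"
    by (intro sum_mono best_single_value_le_Vrob)
  also have "\<dots> = (\<Sum>l\<in>{1..<n}. guarantee {1,2} {0,1} (ustar u l) m Y P (\<sigma>s l))"
    using ropt unfolding robustly_optimal_def by simp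
  also have "\<dots> \<le> (\<Sum>l\<in>{1..<n}. payoff {1,2} {0,1} (ustar u l) (profiles m Y) Q (\<sigma>s l))"
    using ropt unfolding robustly_optimal_def by (intro sum_mono guarantee_le_payoff[OF Q]) auto
  also have "\<dots> = (\<Sum>\<theta>\<in>{1,2}. \<Sum>y\<in>profiles m Y. Q \<theta> y * (\<Sum>l\<in>{1..<n}. eu {0,1} (ustar u l) \<theta> (\<sigma>s l y)))"
    unfolding payoff_def sum_distrib_left by (subst sum.swap, subst (2) sum.swap) (rule refl)
  also have "\<dots> \<le> (\<Sum>\<theta>\<in>{1,2}. \<Sum>y\<in>profiles m Y. Q \<theta> y * eu {1..n} u \<theta> (\<sigma> y))"
    using dom Q unfolding dominates_decomposition_def couplings_def is_dist_def
    by (intro sum_mono mult_left_mono) auto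
  also have "\<dots> = payoff {1,2} {1..n} u (profiles m Y) Q \<sigma>" unfolding payoff_def ..
  finally show "(\<Sum>l\<in>{1..<n}. best_single_value l) \<le> payoff {1,2} {1..n} u (profiles m Y) Q \<sigma>" .
qed

end

theorem theorem2:
  fixes u :: "nat \<Rightarrow> nat \<Rightarrow> real"
    and n m :: nat
    and Y :: "nat \<Rightarrow> 'y set"
    and P :: "nat \<Rightarrow> nat \<Rightarrow> 'y \<Rightarrow> real"
    and \<sigma>s :: "nat \<Rightarrow> (nat \<Rightarrow> 'y) \<Rightarrow> nat \<Rightarrow> real"
  assumes n: "n \<ge> 1" and m: "m \<ge> 1"
    and exps: "\<forall>j<m. is_experiment {1,2} (Y j) (P j)"
    and incr1: "\<forall>i\<in>{1..<n}. u 1 i < u 1 (Suc i)"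
    and decr2: "\<forall>i\<in>{1..<n}. u 2 i > u 2 (Suc i)"
    and norm: "u 1 1 = 0" "u 2 1 = 0"
    and undom: "\<forall>i\<in>{1..n}. \<not> weakly_star_dominated {1,2} {1..n} u i"
    and ropt: "\<forall>l\<in>{1..<n}. robustly_optimal {1,2} {0,1} (ustar u l) m Y P (\<sigma>s l)"
  shows "Vrob {1,2} {1..n} u m Y P =
           (\<Sum>l\<in>{1..<n}. Max ((\<lambda>j. V1 {1,2} {0,1} (ustar u l) (Y j) (P j)) ` {..<m}))
         \<and> (\<exists>\<sigma>\<in>strategies {1..n} (profiles m Y).
            \<forall>y\<in>profiles m Y. \<forall>\<theta>\<in>{1,2}.
              eu {1..n} u \<theta> (\<sigma> y) \<ge> (\<Sum>l\<in>{1..<n}. eu {0,1} (ustar u l) \<theta> (\<sigma>s l y)))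
         \<and> (\<forall>\<sigma>\<in>strategies {1..n} (profiles m Y).
            (\<forall>y\<in>profiles m Y. \<forall>\<theta>\<in>{1,2}.
              eu {1..n} u \<theta> (\<sigma> y) \<ge> (\<Sum>l\<in>{1..<n}. eu {0,1} (ustar u l) \<theta> (\<sigma>s l y)))
            \<longrightarrow> robustly_optimal {1,2} {1..n} u m Y P \<sigma>)"
proof -
  interpret two_state_problem u n m Y P
    using n m exps incr1 decr2 norm undom by unfold_locales
  have optimal: "guarantee {1,2} {1..n} u m Y P \<sigma> = Vrob {1,2} {1..n} u m Y P \<and>
      Vrob {1,2} {1..n} u m Y P = (\<Sum>l\<in>{1..<n}. best_single_value l)"
    if "\<sigma> \<in> strategies {1..n} (profiles m Y)" "dominates_decomposition \<sigma> \<sigma>s" for \<sigma>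
  proof -
    have "guarantee {1,2} {1..n} u m Y P \<sigma> \<le> Vrob {1,2} {1..n} u m Y P"
      by (rule guarantee_le_Vrob[OF worst_coupling_in_couplings that(1)]) auto
    then show ?thesis
      using sum_best_single_value_le_guarantee[OF ropt that] Vrob_le_sum_best_single_value
      by linarith
  qed
  obtain \<sigma> where "\<sigma> \<in> strategies {1..n} (profiles m Y)" "dominates_decomposition \<sigma> \<sigma>s"
    using exists_dominating_strategy ropt unfolding robustly_optimal_def by blast
  then show ?thesis
    using optimal unfolding robustly_optimal_def dominates_decomposition_def best_single_value_def
    by blast
qed

end
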